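(* In a finite dynamic game as described in the context, if $K=(K^i)_{i\in\mathcal{I}}$ is mutually sufficient information, then there exists at least one $K$-based sequential equilibrium, i.e. a sequential equilibrium $(\rho,Q)$ in which $\rho$ is a $K$-based strategy profile.
   Context: Game model: finite set of players $\mathcal{I}$, times $\mathcal{T}=\{1,\dots,T\}$. At time $t$ each player $i$ takes action $U_t^i\in\mathcal{U}_t^i$, obtains reward $R_t^i\in[-1,1]$ and learns new information $Z_t^i\in\mathcal{Z}_t^i$. There is a state $X_t\in\mathcal{X}_t$ with $(X_{t+1},Z_t,R_t)=f_t(X_t,U_t,W_t)$ for fixed functions $f_t$. Primitive random variables $(X_1,H_1)$ (with $H_1=(H_1^i)_i$ initial information) and $W_1,\dots,W_T$ are mutually independent with commonly known distributions. All sets $\mathcal{X}_t,\mathcal{U}_t,\mathcal{Z}_t,\mathcal{W}_t,\mathcal{H}_1$ are finite. Perfect recall: $H_t^i=(H_1^i,Z_{1:t-1}^i)\in\mathcal{H}_t^i$, and $U_t^i$ is a component of $Z_t^i$. Behavioral strategy $g_t^i:\mathcal{H}_t^i\to\Delta(\mathcal{U}_t^i)$; payoff $J^i(g)=\mathbb{E}^g[\sum_t R_t^i]$. A realization is admissible under a partial profile if it has positive probability under some completion. Sequential equilibrium (SE): for a profile $g$ and functions $Q=(Q_t^i)$, $Q_t^i:\mathcal{H}_t^i\times\mathcal{U}_t^i\to\mathbb{R}$: $g$ is sequentially rational under $Q$ if $\mathrm{supp}(g_t^i(h_t^i))\subseteq\arg\max_{u}Q_t^i(h_t^i,u)$ for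 all $i,t,h_t^i$; $Q$ is fully consistent with $g$ if there is a sequence $(g^{(n)},Q^{(n)})\to(g,Q)$ with each $g^{(n)}$ fully mixed (every action has positive probability at every history) and $Q_\tau^{(n),i}(h_\tau^i,u_\tau^i)=\mathbb{E}^{g^{(n)}}[\sum_{t=\tau}^T R_t^i\mid h_\tau^i,u_\tau^i]$ for all $i,\tau,h_\tau^i,u_\tau^i$. $(g,Q)$ is an SE if both hold. Compression: $K_1^i=\iota_1^i(H_1^i)$, $K_t^i=\iota_t^i(K_{t-1}^i,Z_{t-1}^i)$ for fixed maps, finite value sets $\mathcal{K}_t^i$; $k_t^i$ is the compression of $h_t^i$; a $K^i$-based strategy has $\rho_t^i:\mathcal{K}_t^i\to\Delta(\mathcal{U}_t^i)$. Information state: given $g^{-i}$, $K^i$ is an information state under $g^{-i}$ if there exist $P_t^{i,g^{-i}}:\mathcal{K}_t^i\times\mathcal{U}_t^i\to\Delta(\mathcal{K}_{t+1}^i)$, $r_t^{i,g^{-i}}:\mathcal{K}_t^i\times\mathcal{U}_t^i\to[-1,1]$ with $\Pr^{g^i,g^{-i}}(k_{t+1}^i\mid h_t^i,u_t^i)=P_t^{i,g^{-i}}(k_{t+1}^i\mid k_t^i,u_t^i)$ ($t<T$) and $\mathbb{E}^{g^i,g^{-i}}[R_t^i\mid h_t^i,u_t^i]=r_t^{i,g^{-i}}(k_t^i,u_t^i)$ for all $g^i$ and all $(h_t^i,u_t^i)$ admissible under $(g^i,g^{-i})$. $K$ is mutually sufficient information (MSI) if for every $i$ and every profile $\rho^{-i}$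 of $K^j$-based strategies of players $j\neq i$, $K^i$ is an information state under $\rho^{-i}$. *)

theory Defs
  imports "HOL-Probability.Probability"
begin

(* Conventions: times are 0-based, t = 0..T-1 (paper's time t+1).
   Player i's information Z_t^i is the pair (U_t^i, Y_t^i), so that U_t^i is a
   component of Z_t^i (perfect recall).  A history h_t^i is (H_1^i, [Z_0^i,...,Z_{t-1}^i]). *)

record ('p,'x,'u,'y,'w,'h) game =
  init    :: "('x \<times> ('p \<Rightarrow> 'h)) pmf"
  noise   :: "nat \<Rightarrow> 'w pmf"
  dyn     :: "nat \<Rightarrow> 'x \<Rightarrow> ('p \<Rightarrow> 'u) \<Rightarrow> 'w \<Rightarrow> 'x \<times> ('p \<Rightarrow> 'y) \<times> ('p \<Rightarrow> real)"
             (* f_t : (X_t,U_t,W_t) \<mapsto> (X_{t+1}, observations Y_t, rewards R_t) *)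
  acts    :: "nat \<Rightarrow> 'p \<Rightarrow> 'u set"
  horizon :: nat

definition wf_game :: "('p,'x,'u,'y,'w,'h) game \<Rightarrow> bool" where
  "wf_game G \<longleftrightarrow>
     (\<forall>t<horizon G. \<forall>i. acts G t i \<noteq> {}) \<and>
     (\<forall>t<horizon G. \<forall>x u w j. (\<forall>k. u k \<in> acts G t k) \<longrightarrow>
         (let r = snd (snd (dyn G t x u w)) in -1 \<le> r j \<and> r j \<le> 1))"

type_synonym ('h,'u,'y) hist = "'h \<times> ('u \<times> 'y) list"
type_synonym ('p,'x,'u,'w,'h) outcome = "'x \<times> ('p \<Rightarrow> 'h) \<times> (('p \<Rightarrow> 'u) \<times> 'w) list"
type_synonym ('p,'h,'u,'y) profile = "nat \<Rightarrow> 'p \<Rightarrow> ('h,'u,'y) hist \<Rightarrow> 'u pmf"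

fun trace :: "(nat \<Rightarrow> 'x \<Rightarrow> ('p \<Rightarrow> 'u) \<Rightarrow> 'w \<Rightarrow> 'x \<times> ('p \<Rightarrow> 'y) \<times> ('p \<Rightarrow> real))
      \<Rightarrow> nat \<Rightarrow> 'x \<Rightarrow> (('p \<Rightarrow> 'u) \<times> 'w) list
      \<Rightarrow> ('x \<times> ('p \<Rightarrow> 'u) \<times> ('p \<Rightarrow> 'y) \<times> ('p \<Rightarrow> real)) list" where
  "trace f t x [] = []"
| "trace f t x ((u, w) # rest) =
     (case f t x u w of (x', y, r) \<Rightarrow> (x, u, y, r) # trace f (Suc t) x' rest)"

definition traj :: "('p,'x,'u,'y,'w,'h) game \<Rightarrow> ('p,'x,'u,'w,'h) outcome
      \<Rightarrow> ('x \<times> ('p \<Rightarrow> 'u) \<times> ('p \<Rightarrow> 'y) \<times> ('p \<Rightarrow> real)) list" where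
  "traj G \<omega> = (case \<omega> of (x1, h1, s) \<Rightarrow> trace (dyn G) 0 x1 s)"

definition hist :: "('p,'x,'u,'y,'w,'h) game \<Rightarrow> 'p \<Rightarrow> ('p,'x,'u,'w,'h) outcome \<Rightarrow> nat
      \<Rightarrow> ('h,'u,'y) hist" where
  "hist G i \<omega> t = (fst (snd \<omega>) i,
      map (\<lambda>(x, u, y, r). (u i, y i)) (take t (traj G \<omega>)))"

definition action :: "('p,'x,'u,'w,'h) outcome \<Rightarrow> nat \<Rightarrow> 'p \<Rightarrow> 'u" where
  "action \<omega> t i = fst (snd (snd \<omega>) ! t) i"

definition reward :: "('p,'x,'u,'y,'w,'h) game \<Rightarrow> 'p \<Rightarrow> ('p,'x,'u,'w,'h) outcome \<Rightarrow> nat \<Rightarrow> real" where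
  "reward G i \<omega> t = (case traj G \<omega> ! t of (x, u, y, r) \<Rightarrow> r i)"

(* Law of the first t steps of play under behavioral profile g; primitive random
   variables (X_1,H_1), W_1, ..., W_T are mutually independent, players randomize
   independently given their own histories. *)
fun run :: "('p::finite,'x,'u,'y,'w,'h) game \<Rightarrow> ('p,'h,'u,'y) profile \<Rightarrow> nat
      \<Rightarrow> ('p,'x,'u,'w,'h) outcome pmf" where
  "run G g 0 = map_pmf (\<lambda>(x, h). (x, h, [])) (init G)"
| "run G g (Suc t) =
     bind_pmf (run G g t) (\<lambda>\<omega>.
       bind_pmf (Pi_pmf UNIV undefined (\<lambda>i. g t i (hist G i \<omega> t))) (\<lambda>u.
         map_pmf (\<lambda>w. (fst \<omega>, fst (snd \<omega>), snd (snd \<omega>) @ [(u, w)])) (noise G t)))"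

definition play :: "('p::finite,'x,'u,'y,'w,'h) game \<Rightarrow> ('p,'h,'u,'y) profile
      \<Rightarrow> ('p,'x,'u,'w,'h) outcome pmf" where
  "play G g = run G g (horizon G)"

definition hu_event :: "('p,'x,'u,'y,'w,'h) game \<Rightarrow> nat \<Rightarrow> 'p \<Rightarrow> ('h,'u,'y) hist \<Rightarrow> 'u
      \<Rightarrow> ('p,'x,'u,'w,'h) outcome set" where
  "hu_event G t i h u = {\<omega>. hist G i \<omega> t = h \<and> action \<omega> t i = u}"

(* elementary conditional expectation E[X | A] (used only when P(A) > 0) *)
definition cond_exp :: "'a pmf \<Rightarrow> 'a set \<Rightarrow> ('a \<Rightarrow> real) \<Rightarrow> real" where
  "cond_exp M A X = (\<integral>\<omega>. indicator A \<omega> * X \<omega> \<partial>measure_pmf M) / measure_pmf.prob M A"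

definition valid_profile :: "('p,'x,'u,'y,'w,'h) game \<Rightarrow> ('p,'h,'u,'y) profile \<Rightarrow> bool" where
  "valid_profile G g \<longleftrightarrow> (\<forall>t<horizon G. \<forall>i h. set_pmf (g t i h) \<subseteq> acts G t i)"

definition fully_mixed :: "('p,'x,'u,'y,'w,'h) game \<Rightarrow> ('p,'h,'u,'y) profile \<Rightarrow> bool" where
  "fully_mixed G g \<longleftrightarrow> (\<forall>t<horizon G. \<forall>i h. set_pmf (g t i h) = acts G t i)"

definition seq_rational :: "('p,'x,'u,'y,'w,'h) game \<Rightarrow> ('p,'h,'u,'y) profile
      \<Rightarrow> (nat \<Rightarrow> 'p \<Rightarrow> ('h,'u,'y) hist \<Rightarrow> 'u \<Rightarrow> real) \<Rightarrow> bool" where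
  "seq_rational G g Q \<longleftrightarrow>
     (\<forall>t<horizon G. \<forall>i h. set_pmf (g t i h) \<subseteq>
        {u \<in> acts G t i. \<forall>u' \<in> acts G t i. Q t i h u' \<le> Q t i h u})"

definition fully_consistent :: "('p::finite,'x,'u,'y,'w,'h) game \<Rightarrow> ('p,'h,'u,'y) profile
      \<Rightarrow> (nat \<Rightarrow> 'p \<Rightarrow> ('h,'u,'y) hist \<Rightarrow> 'u \<Rightarrow> real) \<Rightarrow> bool" where
  "fully_consistent G g Q \<longleftrightarrow>
     (\<exists>gn Qn. (\<forall>n. valid_profile G (gn n) \<and> fully_mixed G (gn n)) \<and>
        (\<forall>t<horizon G. \<forall>i h u. (\<lambda>n. pmf (gn n t i h) u) \<longlonglongrightarrow> pmf (g t i h) u) \<and>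
        (\<forall>t<horizon G. \<forall>i h u. (\<lambda>n. Qn n t i h u) \<longlonglongrightarrow> Q t i h u) \<and>
        (\<forall>n. \<forall>\<tau><horizon G. \<forall>i h u.
           measure_pmf.prob (play G (gn n)) (hu_event G \<tau> i h u) > 0 \<longrightarrow>
           Qn n \<tau> i h u = cond_exp (play G (gn n)) (hu_event G \<tau> i h u)
                              (\<lambda>\<omega>. \<Sum>t\<in>{\<tau>..<horizon G}. reward G i \<omega> t)))"

definition sequential_equilibrium :: "('p::finite,'x,'u,'y,'w,'h) game \<Rightarrow> ('p,'h,'u,'y) profile
      \<Rightarrow> (nat \<Rightarrow> 'p \<Rightarrow> ('h,'u,'y) hist \<Rightarrow> 'u \<Rightarrow> real) \<Rightarrow> bool" where
  "sequential_equilibrium G g Q \<longleftrightarrow>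
     valid_profile G g \<and> seq_rational G g Q \<and> fully_consistent G g Q"

fun compress_aux :: "(nat \<Rightarrow> 'p \<Rightarrow> 'k \<Rightarrow> ('u \<times> 'y) \<Rightarrow> 'k) \<Rightarrow> 'p \<Rightarrow> 'k \<Rightarrow> nat
      \<Rightarrow> ('u \<times> 'y) list \<Rightarrow> 'k" where
  "compress_aux io i k t [] = k"
| "compress_aux io i k t (z # zs) = compress_aux io i (io t i k z) (Suc t) zs"

definition compress :: "('p \<Rightarrow> 'h \<Rightarrow> 'k) \<Rightarrow> (nat \<Rightarrow> 'p \<Rightarrow> 'k \<Rightarrow> ('u \<times> 'y) \<Rightarrow> 'k)
      \<Rightarrow> 'p \<Rightarrow> ('h,'u,'y) hist \<Rightarrow> 'k" where
  "compress io1 io i h = compress_aux io i (io1 i (fst h)) 0 (snd h)"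

definition kbased :: "('p \<Rightarrow> 'h \<Rightarrow> 'k) \<Rightarrow> (nat \<Rightarrow> 'p \<Rightarrow> 'k \<Rightarrow> ('u \<times> 'y) \<Rightarrow> 'k)
      \<Rightarrow> (nat \<Rightarrow> 'p \<Rightarrow> 'k \<Rightarrow> 'u pmf) \<Rightarrow> ('p,'h,'u,'y) profile" where
  "kbased io1 io \<rho> = (\<lambda>t i h. \<rho> t i (compress io1 io i h))"

definition valid_kstrat :: "('p,'x,'u,'y,'w,'h) game \<Rightarrow> (nat \<Rightarrow> 'p \<Rightarrow> 'k \<Rightarrow> 'u pmf) \<Rightarrow> bool" where
  "valid_kstrat G \<rho> \<longleftrightarrow> (\<forall>t<horizon G. \<forall>i k. set_pmf (\<rho> t i k) \<subseteq> acts G t i)"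

definition upd_player :: "('p,'h,'u,'y) profile \<Rightarrow> 'p \<Rightarrow> (nat \<Rightarrow> ('h,'u,'y) hist \<Rightarrow> 'u pmf)
      \<Rightarrow> ('p,'h,'u,'y) profile" where
  "upd_player g i gi = (\<lambda>t j. if j = i then gi t else g t j)"

(* K^i is an information state under g^{-i} (the i-th component of g is ignored) *)
definition info_state :: "('p::finite,'x,'u,'y,'w,'h) game \<Rightarrow> ('p \<Rightarrow> 'h \<Rightarrow> 'k)
      \<Rightarrow> (nat \<Rightarrow> 'p \<Rightarrow> 'k \<Rightarrow> ('u \<times> 'y) \<Rightarrow> 'k) \<Rightarrow> 'p \<Rightarrow> ('p,'h,'u,'y) profile \<Rightarrow> bool" where
  "info_state G io1 io i g \<longleftrightarrow>
     (\<exists>(P :: nat \<Rightarrow> 'k \<Rightarrow> 'u \<Rightarrow> 'k pmf) (r :: nat \<Rightarrow> 'k \<Rightarrow> 'u \<Rightarrow> real).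
        (\<forall>t k u. -1 \<le> r t k u \<and> r t k u \<le> 1) \<and>
        (\<forall>gi. (\<forall>t<horizon G. \<forall>h. set_pmf (gi t h) \<subseteq> acts G t i) \<longrightarrow>
          (let M = play G (upd_player g i gi) in
           \<forall>t<horizon G. \<forall>h u. measure_pmf.prob M (hu_event G t i h u) > 0 \<longrightarrow>
             (Suc t < horizon G \<longrightarrow> (\<forall>k'.
                cond_exp M (hu_event G t i h u)
                  (\<lambda>\<omega>. indicator {\<omega>. compress io1 io i (hist G i \<omega> (Suc t)) = k'} \<omega>)
                = pmf (P t (compress io1 io i h) u) k')) \<and>
             cond_exp M (hu_event G t i h u) (\<lambda>\<omega>. reward G i \<omega> t)
                = r t (compress io1 io i h) u)))"

definition mutually_sufficient :: "('p::finite,'x,'u,'y,'w,'h) game \<Rightarrow> ('p \<Rightarrow> 'h \<Rightarrow> 'k)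
      \<Rightarrow> (nat \<Rightarrow> 'p \<Rightarrow> 'k \<Rightarrow> ('u \<times> 'y) \<Rightarrow> 'k) \<Rightarrow> bool" where
  "mutually_sufficient G io1 io \<longleftrightarrow>
     (\<forall>i \<rho>. valid_kstrat G \<rho> \<longrightarrow> info_state G io1 io i (kbased io1 io \<rho>))"

end

theory Submission
  imports Defs
begin

text \<open>For every inverse temperature \<open>\<beta>\<close> the map sending a \<open>K\<close>-based profile to the logit
  response to its Q-values has a fixed point by Brouwer's theorem. Mutual sufficiency makes the
  Q-value of an action at a history depend on the history only through its compression (backward
  induction, using that \<open>K\<close> is an information state), so the logit response is again \<open>K\<close>-based;
  it is continuous because its weights are bounded away from zero. Along a subsequence
  \<open>\<beta> \<rightarrow> \<infinity>\<close> the fixed points and their Q-values converge. The fully mixed fixed points witness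
  full consistency of the limit Q-values, and an action with a strictly worse limit Q-value gets
  vanishing logit weight, which is sequential rationality.\<close>

section \<open>Brouwer's theorem for cubes indexed by a finite set\<close>

text \<open>The dimension of the strategy space depends on the horizon, so it is not a type and the
  library's \<open>brouwer\<close> for Euclidean spaces does not apply; we derive the theorem from
  \<open>kuhn_lemma\<close> instead.\<close>

definition unit_cube :: "'a set \<Rightarrow> ('a \<Rightarrow> real) set" where
  "unit_cube I = {x. (\<forall>a\<in>I. 0 \<le> x a \<and> x a \<le> 1) \<and> (\<forall>a. a \<notin> I \<longrightarrow> x a = 0)}"

lemma convergent_subseq_finite_family:
  fixes X :: "'j \<Rightarrow> nat \<Rightarrow> real"
  assumes "finite J" and "\<And>j m. j \<in> J \<Longrightarrow> \<bar>X j m\<bar> \<le> B"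
  obtains \<sigma> where "strict_mono \<sigma>" and "\<And>j. j \<in> J \<Longrightarrow> convergent (\<lambda>m. X j (\<sigma> m))"
proof -
  have "\<exists>\<sigma>. strict_mono \<sigma> \<and> (\<forall>j\<in>J. convergent (\<lambda>m. X j (\<sigma> m)))"
    using assms
  proof (induction J rule: finite_induct)
    case empty
    show ?case by (auto intro: strict_mono_id[unfolded id_def])
  next
    case (insert j J)
    then obtain \<sigma> where \<sigma>: "strict_mono \<sigma>" "\<forall>j\<in>J. convergent (\<lambda>m. X j (\<sigma> m))"
      by auto
    have "bounded (range (\<lambda>m. X j (\<sigma> m)))"
      unfolding bounded_iff using insert.prems by auto
    then obtain l r where r: "strict_mono r" "((\<lambda>m. X j (\<sigma> m)) \<circ> r) \<longlonglongrightarrow> l"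
      using bounded_imp_convergent_subsequence by blast
    have "convergent (\<lambda>m. X j' (\<sigma> (r m)))" if "j' \<in> insert j J" for j'
    proof (cases "j' = j")
      case True
      have "(\<lambda>m. X j (\<sigma> (r m))) \<longlonglongrightarrow> l" using r(2) by (simp add: o_def)
      then show ?thesis using True by (simp add: convergentI)
    next
      case False
      then have "(\<lambda>m. X j' (\<sigma> m)) \<longlonglongrightarrow> lim (\<lambda>m. X j' (\<sigma> m))"
        using \<sigma>(2) that by (simp add: convergent_LIMSEQ_iff)
      from LIMSEQ_subseq_LIMSEQ[OF this r(1)]
      have "(\<lambda>m. X j' (\<sigma> (r m))) \<longlonglongrightarrow> lim (\<lambda>m. X j' (\<sigma> m))" by (simp add: o_def)
      then show ?thesis by (rule convergentI)
    qed
    with strict_mono_o[OF \<sigma>(1) r(1)]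
    have "strict_mono (\<sigma> \<circ> r) \<and> (\<forall>j'\<in>insert j J. convergent (\<lambda>m. X j' ((\<sigma> \<circ> r) m)))"
      by simp
    then show ?case by blast
  qed
  then show ?thesis using that by blast
qed

lemma tendsto_squeeze_above:
  fixes x r e :: "nat \<Rightarrow> real"
  assumes "x \<longlonglongrightarrow> l" "e \<longlonglongrightarrow> 0" "\<And>m. x m \<le> r m" "\<And>m. r m \<le> x m + e m"
  shows "r \<longlonglongrightarrow> l"
proof (rule tendsto_sandwich[OF _ _ assms(1)])
  show "(\<lambda>m. x m + e m) \<longlonglongrightarrow> l" using tendsto_add[OF assms(1,2)] by simp
qed (use assms(3,4) in auto)

text \<open>Label coordinate \<open>j\<close> of a grid point 0 iff \<open>x \<le> F\<close> there and it is off the upper face;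
  \<open>kuhn_lemma\<close> then yields a cell on which every label takes both values.\<close>

lemma kuhn_sign_cell:
  fixes p n :: nat and x F :: "(nat \<Rightarrow> nat) \<Rightarrow> nat \<Rightarrow> real"
  assumes "0 < p"
    and lower: "\<And>q j. \<forall>i<n. q i \<le> p \<Longrightarrow> j < n \<Longrightarrow> q j = 0 \<Longrightarrow> x q j \<le> F q j"
    and upper: "\<And>q j. \<forall>i<n. q i \<le> p \<Longrightarrow> j < n \<Longrightarrow> q j = p \<Longrightarrow> F q j \<le> x q j"
  obtains q where "\<forall>i<n. q i < p"
    and "\<And>j. j < n \<Longrightarrow> \<exists>r s. (\<forall>i<n. q i \<le> r i \<and> r i \<le> q i + 1) \<and> (\<forall>i<n. q i \<le> s i \<and> s i \<le> q i + 1) \<and>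
                          x r j \<le> F r j \<and> F s j \<le> x s j"
proof -
  define label :: "(nat \<Rightarrow> nat) \<Rightarrow> nat \<Rightarrow> nat" where
    "label q j = (if x q j \<le> F q j \<and> q j \<noteq> p then 0 else 1)" for q j
  have label01: "label q j = 0 \<or> label q j = 1" for q j
    unfolding label_def by simp
  obtain q where q: "\<forall>i<n. q i < p"
    and cell: "\<forall>j<n. \<exists>r s. (\<forall>i<n. q i \<le> r i \<and> r i \<le> q i + 1) \<and>
                 (\<forall>i<n. q i \<le> s i \<and> s i \<le> q i + 1) \<and> label r j \<noteq> label s j"
  proof (rule kuhn_lemma[OF \<open>0 < p\<close>, of n label])
    show "\<forall>q. (\<forall>j<n. q j \<le> p) \<longrightarrow> (\<forall>j<n. label q j = 0 \<or> label q j = 1)"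
      using label01 by blast
    show "\<forall>q. (\<forall>j<n. q j \<le> p) \<longrightarrow> (\<forall>j<n. q j = 0 \<longrightarrow> label q j = 0)"
      using lower \<open>0 < p\<close> unfolding label_def by simp
    show "\<forall>q. (\<forall>j<n. q j \<le> p) \<longrightarrow> (\<forall>j<n. q j = p \<longrightarrow> label q j = 1)"
      unfolding label_def by simp
  qed
  have sides: "x r j \<le> F r j \<and> F s j \<le> x s j"
    if "j < n" "label r j = 0" "label s j = 1" "\<forall>i<n. q i \<le> s i \<and> s i \<le> q i + 1" for j r s
  proof
    show "x r j \<le> F r j" using that(2) unfolding label_def by (simp split: if_splits)
    have "\<forall>i<n. s i \<le> p" using that(4) q by (metis Suc_eq_plus1 Suc_leI le_trans)
    then show "F s j \<le> x s j"
      using that(1,3) upper[of s j] unfolding label_def by (cases "s j = p") (auto split: if_splits)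
  qed
  show thesis
  proof (rule that[OF q])
    fix j assume "j < n"
    then obtain r s where rs: "\<forall>i<n. q i \<le> r i \<and> r i \<le> q i + 1" "\<forall>i<n. q i \<le> s i \<and> s i \<le> q i + 1"
      "label r j \<noteq> label s j"
      using cell by blast
    then have "label r j = 0 \<and> label s j = 1 \<or> label s j = 0 \<and> label r j = 1"
      using label01[of r j] label01[of s j] by auto
    then show "\<exists>r s. (\<forall>i<n. q i \<le> r i \<and> r i \<le> q i + 1) \<and> (\<forall>i<n. q i \<le> s i \<and> s i \<le> q i + 1) \<and>
                 x r j \<le> F r j \<and> F s j \<le> x s j"
      using sides[OF \<open>j < n\<close> _ _ rs(2)] sides[OF \<open>j < n\<close> _ _ rs(1)] rs(1,2) by blast
  qed
qed

definition approx_fixpoint ::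
    "'a set \<Rightarrow> (('a \<Rightarrow> real) \<Rightarrow> 'a \<Rightarrow> real) \<Rightarrow> real \<Rightarrow> ('a \<Rightarrow> real) \<Rightarrow> ('a \<Rightarrow> 'a \<Rightarrow> real) \<Rightarrow> ('a \<Rightarrow> 'a \<Rightarrow> real) \<Rightarrow> bool"
  where "approx_fixpoint I f e x r s \<longleftrightarrow> x \<in> unit_cube I \<and> (\<forall>a\<in>I.
     r a \<in> unit_cube I \<and> s a \<in> unit_cube I \<and> r a a \<le> f (r a) a \<and> f (s a) a \<le> s a a \<and>
     (\<forall>a'\<in>I. x a' \<le> r a a' \<and> r a a' \<le> x a' + e \<and> x a' \<le> s a a' \<and> s a a' \<le> x a' + e))"

lemma unit_cube_approx_fixpoint:
  fixes p :: nat
  assumes "finite I" and into: "\<And>x. x \<in> unit_cube I \<Longrightarrow> f x \<in> unit_cube I" and "0 < p"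
  shows "\<exists>x r s. approx_fixpoint I f (1 / p) x r s"
proof -
  define n where "n = card I"
  obtain b where b: "bij_betw b {0..<n} I"
    using ex_bij_betw_nat_finite[OF \<open>finite I\<close>] unfolding n_def by blast
  define bi where "bi = inv_into {0..<n} b"
  have bi: "bi a < n" "b (bi a) = a" if "a \<in> I" for a
    using b that unfolding bi_def bij_betw_def by (auto intro: inv_into_into f_inv_into_f)
  have b_bi: "b j \<in> I" "bi (b j) = j" if "j < n" for j
    using b that unfolding bi_def bij_betw_def by (auto intro: inv_into_f_f)
  define pt :: "(nat \<Rightarrow> nat) \<Rightarrow> 'a \<Rightarrow> real" where
    "pt q a = (if a \<in> I then real (q (bi a)) / real p else 0)" for q a
  let ?cell = "\<lambda>q r. \<forall>i<n. q i \<le> r i \<and> r i \<le> q i + 1"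
  have pt_cube: "pt q \<in> unit_cube I" if "\<forall>j<n. q j \<le> p" for q
    using that bi \<open>0 < p\<close> unfolding unit_cube_def pt_def by auto
  have f_pt: "0 \<le> f (pt q) (b j) \<and> f (pt q) (b j) \<le> 1" if "\<forall>j<n. q j \<le> p" "j < n" for q j
    using into[OF pt_cube[OF that(1)]] b_bi[OF that(2)] unfolding unit_cube_def by auto
  obtain q where q: "\<forall>i<n. q i < p"
    and cell: "\<And>j. j < n \<Longrightarrow> \<exists>r s. ?cell q r \<and> ?cell q s \<and>
                 pt r (b j) \<le> f (pt r) (b j) \<and> f (pt s) (b j) \<le> pt s (b j)"
    by (rule kuhn_sign_cell[OF \<open>0 < p\<close>, of n "\<lambda>q j. pt q (b j)" "\<lambda>q j. f (pt q) (b j)"])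
      (use f_pt b_bi \<open>0 < p\<close> in \<open>auto simp: pt_def\<close>)
  have near: "pt q a \<le> pt r a \<and> pt r a \<le> pt q a + 1 / p" if "?cell q r" "a \<in> I" for r a
  proof -
    have "q (bi a) \<le> r (bi a) \<and> r (bi a) \<le> q (bi a) + 1" using that bi by blast
    then have "real (q (bi a)) \<le> real (r (bi a)) \<and> real (r (bi a)) \<le> real (q (bi a)) + 1"
      by linarith
    then show ?thesis
      using \<open>0 < p\<close> \<open>a \<in> I\<close> unfolding pt_def by (simp add: divide_right_mono add_divide_distrib[symmetric])
  qed
  have cell_cube: "pt r \<in> unit_cube I" if "?cell q r" for r
    using that q by (intro pt_cube) (metis Suc_eq_plus1 Suc_leI le_trans)
  have "\<exists>r s. ?cell q r \<and> ?cell q s \<and> pt r a \<le> f (pt r) a \<and> f (pt s) a \<le> pt s a" if "a \<in> I" for a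
    using cell[OF bi(1)[OF that]] bi(2)[OF that] by simp
  then obtain r s where "\<And>a. a \<in> I \<Longrightarrow> ?cell q (r a) \<and> ?cell q (s a) \<and>
      pt (r a) a \<le> f (pt (r a)) a \<and> f (pt (s a)) a \<le> pt (s a) a"
    by metis
  then show ?thesis
    using near cell_cube pt_cube q unfolding approx_fixpoint_def
    by (intro exI[of _ "pt q"] exI[of _ "\<lambda>a. pt (r a)"] exI[of _ "\<lambda>a. pt (s a)"]) (auto simp: less_imp_le)
qed

lemma unit_cube_convergent_subseq:
  fixes x :: "nat \<Rightarrow> 'a \<Rightarrow> real"
  assumes "finite I" and x: "\<And>m. x m \<in> unit_cube I"
  obtains \<sigma> x' where "strict_mono \<sigma>" and "x' \<in> unit_cube I" and "\<And>a. (\<lambda>m. x (\<sigma> m) a) \<longlonglongrightarrow> x' a"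
proof -
  have "\<bar>x m a\<bar> \<le> 1" if "a \<in> I" for m a
    using x[of m] that unfolding unit_cube_def by auto
  then obtain \<sigma> where \<sigma>: "strict_mono \<sigma>" and conv: "\<And>a. a \<in> I \<Longrightarrow> convergent (\<lambda>m. x (\<sigma> m) a)"
    using convergent_subseq_finite_family[OF \<open>finite I\<close>, of "\<lambda>a m. x m a" 1] by blast
  define x' where "x' a = (if a \<in> I then lim (\<lambda>m. x (\<sigma> m) a) else 0)" for a
  have x'_lim: "(\<lambda>m. x (\<sigma> m) a) \<longlonglongrightarrow> x' a" for a
  proof (cases "a \<in> I")
    case True
    then show ?thesis using conv[OF True] unfolding x'_def by (simp add: convergent_LIMSEQ_iff)
  next
    case False
    then show ?thesis using x unfolding x'_def unit_cube_def by simp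
  qed
  have "0 \<le> x' a \<and> x' a \<le> 1" if "a \<in> I" for a
    using x that unfolding unit_cube_def
    by (auto intro!: LIMSEQ_le_const[OF x'_lim] LIMSEQ_le_const2[OF x'_lim])
  then have "x' \<in> unit_cube I" unfolding unit_cube_def x'_def by auto
  then show thesis using that \<sigma> x'_lim by blast
qed

lemma brouwer_unit_cube:
  assumes "finite I" and into: "\<And>x. x \<in> unit_cube I \<Longrightarrow> f x \<in> unit_cube I"
    and cont: "\<And>X x a. (\<And>m. X m \<in> unit_cube I) \<Longrightarrow> x \<in> unit_cube I \<Longrightarrow>
                 (\<And>a'. a' \<in> I \<Longrightarrow> (\<lambda>m. X m a') \<longlonglongrightarrow> x a') \<Longrightarrow> a \<in> I \<Longrightarrow>
                 (\<lambda>m. f (X m) a) \<longlonglongrightarrow> f x a"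
  obtains x where "x \<in> unit_cube I" and "f x = x"
proof -
  have "\<exists>x r s. approx_fixpoint I f (1 / Suc m) x r s" for m
    using unit_cube_approx_fixpoint[where p = "Suc m", OF \<open>finite I\<close> into] by simp
  then obtain x r s where approx: "\<And>m. approx_fixpoint I f (1 / Suc m) (x m) (r m) (s m)"
    by metis
  obtain \<sigma> x' where \<sigma>: "strict_mono \<sigma>" and x': "x' \<in> unit_cube I"
    and x'_lim: "\<And>a. (\<lambda>m. x (\<sigma> m) a) \<longlonglongrightarrow> x' a"
    using unit_cube_convergent_subseq[OF \<open>finite I\<close>, of x] approx unfolding approx_fixpoint_def by blast
  have mesh: "(\<lambda>m. 1 / real (Suc (\<sigma> m))) \<longlonglongrightarrow> 0"
    using LIMSEQ_subseq_LIMSEQ[OF LIMSEQ_inverse_real_of_nat \<sigma>] by (simp add: o_def inverse_eq_divide)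
  have f_lim: "(\<lambda>m. y m a) \<longlonglongrightarrow> x' a \<and> (\<lambda>m. f (y m) a) \<longlonglongrightarrow> f x' a"
    if "a \<in> I" "\<And>m. y m \<in> unit_cube I"
      and between: "\<And>m a'. a' \<in> I \<Longrightarrow> x (\<sigma> m) a' \<le> y m a' \<and> y m a' \<le> x (\<sigma> m) a' + 1 / Suc (\<sigma> m)"
    for a y
  proof -
    have "(\<lambda>m. y m a') \<longlonglongrightarrow> x' a'" if "a' \<in> I" for a'
      using between[OF that] by (intro tendsto_squeeze_above[OF x'_lim mesh]) auto
    then show ?thesis using cont[of y x' a] that(1,2) x' by blast
  qed
  have "f x' a = x' a" for a
  proof (cases "a \<in> I")
    case True
    note rs = approx[unfolded approx_fixpoint_def, THEN conjunct2, rule_format, OF True]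
    have "x' a \<le> f x' a"
      using f_lim[OF True, of "\<lambda>m. r (\<sigma> m) a"] rs
      by (intro LIMSEQ_le[where X = "\<lambda>m. r (\<sigma> m) a a"]) auto
    moreover have "f x' a \<le> x' a"
      using f_lim[OF True, of "\<lambda>m. s (\<sigma> m) a"] rs
      by (intro LIMSEQ_le[where Y = "\<lambda>m. s (\<sigma> m) a a"]) auto
    ultimately show ?thesis by simp
  next
    case False
    then show ?thesis using into[OF x'] x' unfolding unit_cube_def by auto
  qed
  then show thesis using that x' by blast
qed

section \<open>Conditional expectations on finite probability spaces\<close>

lemma integral_bind_pmf_finite:
  fixes f :: "'b \<Rightarrow> real"
  assumes "finite (set_pmf M)" and "\<And>x. x \<in> set_pmf M \<Longrightarrow> finite (set_pmf (N x))"
  shows "(\<integral>y. f y \<partial>bind_pmf M N) = (\<integral>x. (\<integral>y. f y \<partial>N x) \<partial>M)"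
proof -
  have "(\<integral>y. f y \<partial>bind_pmf M N) = (\<Sum>x\<in>set_pmf M. pmf M x * (\<integral>y. f y \<partial>N x))"
    using pmf_expectation_bind[where p = M and f = N and h = f, OF assms subset_refl] by simp
  also have "\<dots> = (\<integral>x. (\<integral>y. f y \<partial>N x) \<partial>M)"
    by (subst integral_measure_pmf_real[OF assms(1)]) (auto simp: mult.commute)
  finally show ?thesis .
qed

lemma integral_indicator_eq_cond_exp:
  "measure_pmf.prob M A > 0 \<Longrightarrow>
     (\<integral>\<omega>. indicator A \<omega> * X \<omega> \<partial>M) = measure_pmf.prob M A * cond_exp M A X"
  unfolding cond_exp_def by simp

lemma cond_exp_abs_le:
  assumes "finite (set_pmf M)" and bound: "\<And>\<omega>. \<omega> \<in> set_pmf M \<Longrightarrow> \<bar>X \<omega>\<bar> \<le> B"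
  shows "\<bar>cond_exp M A X\<bar> \<le> B"
proof (cases "measure_pmf.prob M A > 0")
  case True
  have "\<bar>\<integral>\<omega>. indicator A \<omega> * X \<omega> \<partial>M\<bar> \<le> (\<integral>\<omega>. \<bar>indicator A \<omega> * X \<omega>\<bar> \<partial>M)"
    by (rule integral_abs_bound)
  also have "\<dots> \<le> (\<integral>\<omega>. indicator A \<omega> * B \<partial>M)"
    using assms by (intro integral_mono_AE integrable_measure_pmf_finite)
      (auto simp: AE_measure_pmf_iff abs_mult indicator_def)
  finally have "\<bar>\<integral>\<omega>. indicator A \<omega> * X \<omega> \<partial>M\<bar> \<le> measure_pmf.prob M A * B" by simp
  then show ?thesis
    using True unfolding cond_exp_def by (simp add: abs_divide pos_divide_le_eq mult.commute)
next
  case False \<comment> \<open>then \<open>cond_exp M A X = 0\<close>, by division by zero\<close>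
  obtain \<omega> where "\<omega> \<in> set_pmf M" using set_pmf_not_empty[of M] by blast
  then have "0 \<le> B" using bound[of \<omega>] by linarith
  moreover have "measure_pmf.prob M A = 0" using False measure_nonneg[of _ A] by (simp add: less_le)
  ultimately show ?thesis unfolding cond_exp_def by simp
qed

lemma integral_mult_fibre_sum:
  fixes Y :: "'a \<Rightarrow> real"
  assumes fin: "finite (set_pmf M)"
  shows "(\<integral>\<omega>. \<phi> (key \<omega>) * Y \<omega> \<partial>M) =
         (\<Sum>a\<in>key ` set_pmf M. \<phi> a * (\<integral>\<omega>. indicator {\<omega>. key \<omega> = a} \<omega> * Y \<omega> \<partial>M))"
proof -
  have "\<phi> (key \<omega>) * Y \<omega> = (\<Sum>a\<in>key ` set_pmf M. \<phi> a * (indicator {\<omega>. key \<omega> = a} \<omega> * Y \<omega>))"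
    if "\<omega> \<in> set_pmf M" for \<omega>
  proof -
    have "(\<Sum>a\<in>key ` set_pmf M. \<phi> a * (indicator {\<omega>. key \<omega> = a} \<omega> * Y \<omega>)) =
          (\<Sum>a\<in>key ` set_pmf M. if key \<omega> = a then \<phi> a * Y \<omega> else 0)"
      by (intro sum.cong) (auto simp: indicator_def)
    then show ?thesis using that fin by simp
  qed
  then have "(\<integral>\<omega>. \<phi> (key \<omega>) * Y \<omega> \<partial>M) =
      (\<integral>\<omega>. (\<Sum>a\<in>key ` set_pmf M. \<phi> a * (indicator {\<omega>. key \<omega> = a} \<omega> * Y \<omega>)) \<partial>M)"
    by (intro integral_cong_AE) (auto simp: AE_measure_pmf_iff)
  then show ?thesis by (simp add: integral_sum integrable_measure_pmf_finite[OF fin])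
qed

lemma integral_mult_cond_exp_fibres:
  fixes X :: "'a \<Rightarrow> real"
  assumes fin: "finite (set_pmf M)"
    and c: "\<And>a. measure_pmf.prob M {\<omega>. key \<omega> = a} > 0 \<Longrightarrow> cond_exp M {\<omega>. key \<omega> = a} X = c a"
  shows "(\<integral>\<omega>. \<phi> (key \<omega>) * X \<omega> \<partial>M) = (\<integral>\<omega>. \<phi> (key \<omega>) * c (key \<omega>) \<partial>M)"
proof -
  have "(\<integral>\<omega>. indicator {\<omega>. key \<omega> = a} \<omega> * X \<omega> \<partial>M) =
        (\<integral>\<omega>. indicator {\<omega>. key \<omega> = a} \<omega> * c (key \<omega>) \<partial>M)" if "a \<in> key ` set_pmf M" for a
  proof -
    have pos: "measure_pmf.prob M {\<omega>. key \<omega> = a} > 0"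
      using that by (auto intro: measure_pmf_posI)
    have "(\<integral>\<omega>. indicator {\<omega>. key \<omega> = a} \<omega> * c (key \<omega>) \<partial>M) =
          (\<integral>\<omega>. indicator {\<omega>. key \<omega> = a} \<omega> * c a \<partial>M)"
      by (intro Bochner_Integration.integral_cong) (auto simp: indicator_def)
    also have "\<dots> = measure_pmf.prob M {\<omega>. key \<omega> = a} * c a"
      by simp
    also have "\<dots> = (\<integral>\<omega>. indicator {\<omega>. key \<omega> = a} \<omega> * X \<omega> \<partial>M)"
      by (simp add: integral_indicator_eq_cond_exp[OF pos] c[OF pos])
    finally show ?thesis by simp
  qed
  then show ?thesis
    using integral_mult_fibre_sum[OF fin, where \<phi> = \<phi> and key = key and Y = X]
      integral_mult_fibre_sum[OF fin, where \<phi> = \<phi> and key = key and Y = "\<lambda>\<omega>. c (key \<omega>)"]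
    by simp
qed

section \<open>Plays\<close>

lemma length_trace [simp]: "length (trace f t x s) = length s"
  by (induction s arbitrary: t x) (auto split: prod.splits)

lemma take_trace: "take n (trace f t x s) = trace f t x (take n s)"
proof (induction s arbitrary: t x n)
  case (Cons a s)
  then show ?case by (cases a; cases n) (auto split: prod.splits)
qed simp

lemma nth_trace:
  assumes "j < length s"
  obtains x' where "snd (trace f t x s ! j) = (fst (s ! j), snd (f (t + j) x' (fst (s ! j)) (snd (s ! j))))"
  using assms
proof (induction s arbitrary: t x j)
  case (Cons a s)
  obtain u w where a: "a = (u, w)" by (cases a)
  obtain x' y r where fx: "f t x u w = (x', y, r)" by (cases "f t x u w") auto
  show ?case
  proof (cases j)
    case 0
    then show ?thesis using Cons.prems(1)[of x] a fx by simp
  next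
    case (Suc j')
    then show ?thesis
      using Cons.IH[of "Suc t" x' j'] Cons.prems a fx by auto
  qed
qed simp

definition outcome_len :: "('p,'x,'u,'w,'h) outcome \<Rightarrow> nat" where
  "outcome_len \<omega> = length (snd (snd \<omega>))"

definition truncate_outcome :: "nat \<Rightarrow> ('p,'x,'u,'w,'h) outcome \<Rightarrow> ('p,'x,'u,'w,'h) outcome" where
  "truncate_outcome m \<omega> = (fst \<omega>, fst (snd \<omega>), take m (snd (snd \<omega>)))"

definition extend_outcome :: "('p,'x,'u,'w,'h) outcome \<Rightarrow> ('p \<Rightarrow> 'u) \<Rightarrow> 'w \<Rightarrow> ('p,'x,'u,'w,'h) outcome" where
  "extend_outcome \<omega> u w = (fst \<omega>, fst (snd \<omega>), snd (snd \<omega>) @ [(u, w)])"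

lemma run_Suc_extend:
  "run G g (Suc t) = bind_pmf (run G g t) (\<lambda>\<omega>.
     bind_pmf (Pi_pmf UNIV undefined (\<lambda>i. g t i (hist G i \<omega> t))) (\<lambda>u.
       map_pmf (extend_outcome \<omega> u) (noise G t)))"
  unfolding extend_outcome_def[abs_def] by simp

lemma outcome_len_run: "\<omega> \<in> set_pmf (run G g t) \<Longrightarrow> outcome_len \<omega> = t"
  by (induction t arbitrary: \<omega>) (auto simp: outcome_len_def)

lemma finite_outcome_len:
  "finite {\<omega> :: ('p::finite,'x::finite,'u::finite,'w::finite,'h::finite) outcome. outcome_len \<omega> = t}"
proof (rule finite_subset)
  show "{\<omega> :: ('p,'x,'u,'w,'h) outcome. outcome_len \<omega> = t} \<subseteq> UNIV \<times> UNIV \<times> {s. set s \<subseteq> UNIV \<and> length s = t}"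
    by (auto simp: outcome_len_def)
qed (intro finite_cartesian_product finite_lists_length_eq; simp)

lemma finite_set_run:
  "finite (set_pmf (run (G :: ('p::finite,'x::finite,'u::finite,'y,'w::finite,'h::finite) game) g t))"
  by (rule finite_subset[OF _ finite_outcome_len[of t]]) (auto dest: outcome_len_run)

lemma hist_truncate: "t \<le> m \<Longrightarrow> hist G i (truncate_outcome m \<omega>) t = hist G i \<omega> t"
  by (cases \<omega>) (simp add: hist_def truncate_outcome_def traj_def take_trace min_absorb1)

lemma action_truncate: "t < m \<Longrightarrow> action (truncate_outcome m \<omega>) t i = action \<omega> t i"
  unfolding action_def truncate_outcome_def by simp

lemma truncate_extend: "outcome_len \<omega> = t \<Longrightarrow> truncate_outcome t (extend_outcome \<omega> u w) = \<omega>"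
  by (simp add: outcome_len_def truncate_outcome_def extend_outcome_def)

lemma hist_extend: "outcome_len \<omega> = t \<Longrightarrow> hist G i (extend_outcome \<omega> u w) t = hist G i \<omega> t"
  using hist_truncate[of t t G i "extend_outcome \<omega> u w"] by (simp add: truncate_extend)

lemma action_extend: "outcome_len \<omega> = t \<Longrightarrow> action (extend_outcome \<omega> u w) t i = u i"
  by (simp add: outcome_len_def extend_outcome_def action_def nth_append)

lemma map_pmf_run_Suc:
  assumes "\<And>\<omega> u w. \<omega> \<in> set_pmf (run G g t) \<Longrightarrow> f (extend_outcome \<omega> u w) = f' \<omega> u"
  shows "map_pmf f (run G g (Suc t)) =
    bind_pmf (run G g t) (\<lambda>\<omega>. map_pmf (f' \<omega>) (Pi_pmf UNIV undefined (\<lambda>i. g t i (hist G i \<omega> t))))"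
  unfolding run_Suc_extend map_bind_pmf
proof (rule bind_pmf_cong[OF refl])
  fix \<omega> assume "\<omega> \<in> set_pmf (run G g t)"
  then have "bind_pmf (Pi_pmf UNIV undefined (\<lambda>i. g t i (hist G i \<omega> t)))
        (\<lambda>u. map_pmf f (map_pmf (extend_outcome \<omega> u) (noise G t))) =
      bind_pmf (Pi_pmf UNIV undefined (\<lambda>i. g t i (hist G i \<omega> t))) (\<lambda>u. return_pmf (f' \<omega> u))"
    by (simp add: map_pmf_comp assms)
  then show "bind_pmf (Pi_pmf UNIV undefined (\<lambda>i. g t i (hist G i \<omega> t)))
        (\<lambda>u. map_pmf f (map_pmf (extend_outcome \<omega> u) (noise G t))) =
      map_pmf (f' \<omega>) (Pi_pmf UNIV undefined (\<lambda>i. g t i (hist G i \<omega> t)))"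
    by (simp add: map_pmf_def)
qed

lemma map_truncate_run: "m \<le> n \<Longrightarrow> map_pmf (truncate_outcome m) (run G g n) = run G g m"
proof (induction n rule: dec_induct)
  case base
  show ?case
    by (rule map_pmf_idI) (auto dest!: outcome_len_run simp: outcome_len_def truncate_outcome_def)
next
  case (step n)
  have "truncate_outcome m (extend_outcome \<omega> u w) = truncate_outcome m \<omega>"
    if "\<omega> \<in> set_pmf (run G g n)" for \<omega> u w
    using outcome_len_run[OF that] step.hyps
    by (simp add: outcome_len_def truncate_outcome_def extend_outcome_def)
  then have "map_pmf (truncate_outcome m) (run G g (Suc n)) = map_pmf (truncate_outcome m) (run G g n)"
    by (subst map_pmf_run_Suc[where f' = "\<lambda>\<omega> _. truncate_outcome m \<omega>"]) (auto simp: map_pmf_def)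
  then show ?case using step.IH by simp
qed

lemma map_pmf_run_truncate_invariant:
  assumes "m \<le> n" and "\<And>\<omega>. f (truncate_outcome m \<omega>) = f \<omega>"
  shows "map_pmf f (run G g n) = map_pmf f (run G g m)"
  by (simp add: map_truncate_run[OF assms(1), symmetric] map_pmf_comp assms(2))

lemma hist_action_law:
  fixes G :: "('p::finite,'x,'u,'y,'w,'h) game"
  assumes "t < n"
  shows "map_pmf (\<lambda>\<omega>. (hist G i \<omega> t, action \<omega> t i)) (run G g n) =
    bind_pmf (map_pmf (\<lambda>\<omega>. hist G i \<omega> t) (run G g n)) (\<lambda>h. map_pmf (Pair h) (g t i h))"
proof -
  have "map_pmf (\<lambda>\<omega>. (hist G i \<omega> t, action \<omega> t i)) (run G g n) =
        map_pmf (\<lambda>\<omega>. (hist G i \<omega> t, action \<omega> t i)) (run G g (Suc t))"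
    using assms by (intro map_pmf_run_truncate_invariant) (auto simp: hist_truncate action_truncate)
  also have "\<dots> = bind_pmf (run G g t) (\<lambda>\<omega>.
      map_pmf (\<lambda>u. (hist G i \<omega> t, u i)) (Pi_pmf UNIV undefined (\<lambda>i. g t i (hist G i \<omega> t))))"
    by (rule map_pmf_run_Suc) (simp add: outcome_len_run hist_extend action_extend)
  also have "\<dots> = bind_pmf (run G g t) (\<lambda>\<omega>. map_pmf (Pair (hist G i \<omega> t)) (g t i (hist G i \<omega> t)))"
  proof -
    have "map_pmf (\<lambda>u. (hist G i \<omega> t, u i)) (Pi_pmf UNIV undefined (\<lambda>i. g t i (hist G i \<omega> t))) =
          map_pmf (Pair (hist G i \<omega> t)) (g t i (hist G i \<omega> t))" for \<omega>
    proof -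
      have "map_pmf (\<lambda>u. (hist G i \<omega> t, u i)) (Pi_pmf UNIV undefined (\<lambda>i. g t i (hist G i \<omega> t))) =
            map_pmf (Pair (hist G i \<omega> t))
              (map_pmf (\<lambda>f. f i) (Pi_pmf UNIV undefined (\<lambda>i. g t i (hist G i \<omega> t))))"
        by (simp add: map_pmf_comp)
      then show ?thesis by (simp add: Pi_pmf_component)
    qed
    then show ?thesis by simp
  qed
  also have "\<dots> = bind_pmf (map_pmf (\<lambda>\<omega>. hist G i \<omega> t) (run G g n)) (\<lambda>h. map_pmf (Pair h) (g t i h))"
  proof -
    have "map_pmf (\<lambda>\<omega>. hist G i \<omega> t) (run G g n) = map_pmf (\<lambda>\<omega>. hist G i \<omega> t) (run G g t)"
      using assms by (intro map_pmf_run_truncate_invariant) (auto simp: hist_truncate)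
    then show ?thesis by (simp add: bind_map_pmf)
  qed
  finally show ?thesis .
qed

lemma integral_run_action:
  fixes G :: "('p::finite,'x::finite,'u::finite,'y,'w::finite,'h::finite) game"
    and F :: "('h,'u,'y) hist \<Rightarrow> 'u \<Rightarrow> real"
  assumes "t < n"
  shows "(\<integral>\<omega>. F (hist G i \<omega> t) (action \<omega> t i) \<partial>run G g n) =
         (\<integral>\<omega>. (\<integral>u. F (hist G i \<omega> t) u \<partial>g t i (hist G i \<omega> t)) \<partial>run G g n)"
proof -
  have "(\<integral>\<omega>. F (hist G i \<omega> t) (action \<omega> t i) \<partial>run G g n) =
        (\<integral>z. case_prod F z \<partial>map_pmf (\<lambda>\<omega>. (hist G i \<omega> t, action \<omega> t i)) (run G g n))"
    by simp
  also have "\<dots> = (\<integral>z. case_prod F z \<partial>bind_pmf (map_pmf (\<lambda>\<omega>. hist G i \<omega> t) (run G g n))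
                      (\<lambda>h. map_pmf (Pair h) (g t i h)))"
    by (simp only: hist_action_law[OF assms])
  also have "\<dots> = (\<integral>h. (\<integral>z. case_prod F z \<partial>map_pmf (Pair h) (g t i h))
                      \<partial>map_pmf (\<lambda>\<omega>. hist G i \<omega> t) (run G g n))"
    by (rule integral_bind_pmf_finite) (simp_all add: finite_set_run)
  finally show ?thesis by simp
qed

lemma prob_hu_event:
  fixes G :: "('p::finite,'x::finite,'u::finite,'y,'w::finite,'h::finite) game"
  assumes "t < n"
  shows "measure_pmf.prob (run G g n) (hu_event G t i h u) =
         measure_pmf.prob (run G g n) {\<omega>. hist G i \<omega> t = h} * pmf (g t i h) u"
proof -
  have "measure_pmf.prob (run G g n) (hu_event G t i h u) =
        (\<integral>\<omega>. indicator (hu_event G t i h u) \<omega> \<partial>run G g n)"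
    by simp
  also have "\<dots> = (\<integral>\<omega>. indicator {h} (hist G i \<omega> t) * indicator {u} (action \<omega> t i) \<partial>run G g n)"
    by (intro Bochner_Integration.integral_cong) (auto simp: hu_event_def indicator_def)
  also have "\<dots> = (\<integral>\<omega>. indicator {h} (hist G i \<omega> t) * pmf (g t i (hist G i \<omega> t)) u \<partial>run G g n)"
    by (simp add: integral_run_action[OF assms, where F = "\<lambda>h' u'. indicator {h} h' * indicator {u} u'"]
        measure_pmf_single)
  also have "\<dots> = (\<integral>\<omega>. indicator {\<omega>. hist G i \<omega> t = h} \<omega> * pmf (g t i h) u \<partial>run G g n)"
    by (rule Bochner_Integration.integral_cong) (auto simp: indicator_def)
  finally show ?thesis by simp
qed

lemma length_traj: "length (traj G \<omega>) = outcome_len \<omega>"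
  by (cases \<omega>) (simp add: traj_def outcome_len_def)

lemma fst_snd_traj_nth:
  assumes "t < outcome_len \<omega>"
  shows "fst (snd (traj G \<omega> ! t)) = fst (snd (snd \<omega>) ! t)"
proof -
  obtain x h s where \<omega>: "\<omega> = (x, h, s)" by (cases \<omega>) auto
  have "t < length s" using assms \<omega> by (simp add: outcome_len_def)
  then obtain x' where "snd (trace (dyn G) 0 x s ! t) =
      (fst (s ! t), snd (dyn G (0 + t) x' (fst (s ! t)) (snd (s ! t))))"
    by (rule nth_trace)
  then show ?thesis by (simp add: traj_def \<omega>)
qed

lemma hist_Suc:
  assumes "t < outcome_len \<omega>"
  obtains y where "hist G i \<omega> (Suc t) = (fst (hist G i \<omega> t), snd (hist G i \<omega> t) @ [(action \<omega> t i, y)])"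
proof -
  have "take (Suc t) (traj G \<omega>) = take t (traj G \<omega>) @ [traj G \<omega> ! t]"
    using assms by (simp add: take_Suc_conv_app_nth length_traj)
  then have "hist G i \<omega> (Suc t) = (fst (hist G i \<omega> t),
      snd (hist G i \<omega> t) @ [(fst (snd (traj G \<omega> ! t)) i, fst (snd (snd (traj G \<omega> ! t))) i)])"
    unfolding hist_def by (simp add: case_prod_beta)
  then show thesis
    using that[of "fst (snd (snd (traj G \<omega> ! t))) i"] fst_snd_traj_nth[OF assms, of G]
    unfolding action_def by simp
qed

definition hist_step :: "('h,'u,'y) hist \<Rightarrow> 'u \<Rightarrow> ('h,'u,'y) hist \<Rightarrow> bool" where
  "hist_step h u h' \<longleftrightarrow> (\<exists>y. h' = (fst h, snd h @ [(u, y)]))"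

lemma hu_event_iff_hist_step:
  assumes "t < outcome_len \<omega>"
  shows "\<omega> \<in> hu_event G t i h u \<longleftrightarrow> hist_step h u (hist G i \<omega> (Suc t))"
proof -
  obtain y where "hist G i \<omega> (Suc t) = (fst (hist G i \<omega> t), snd (hist G i \<omega> t) @ [(action \<omega> t i, y)])"
    using hist_Suc[OF assms] by blast
  then show ?thesis
    unfolding hist_step_def hu_event_def by (cases "hist G i \<omega> t") auto
qed

lemma action_in_acts_run:
  assumes "valid_profile G g" "\<omega> \<in> set_pmf (run G g n)" "n \<le> horizon G" "t < n"
  shows "fst (snd (snd \<omega>) ! t) j \<in> acts G t j"
  using assms(2-4)
proof (induction n arbitrary: \<omega>)
  case (Suc n)
  from Suc.prems(1) obtain \<omega>' u w where \<omega>': "\<omega>' \<in> set_pmf (run G g n)"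
    and u: "u \<in> set_pmf (Pi_pmf UNIV undefined (\<lambda>i. g n i (hist G i \<omega>' n)))"
    and \<omega>: "\<omega> = extend_outcome \<omega>' u w"
    unfolding run_Suc_extend by auto
  have len: "length (snd (snd \<omega>')) = n" using outcome_len_run[OF \<omega>'] by (simp add: outcome_len_def)
  show ?case
  proof (cases "t < n")
    case True
    then show ?thesis using Suc.IH[OF \<omega>'] Suc.prems len \<omega> by (simp add: extend_outcome_def nth_append)
  next
    case False
    then have "t = n" using Suc.prems by simp
    have "u j \<in> set_pmf (g n j (hist G j \<omega>' n))"
      using u by (simp add: set_Pi_pmf PiE_dflt_def)
    also have "\<dots> \<subseteq> acts G n j"
      using assms(1) Suc.prems(2) unfolding valid_profile_def Suc_le_eq by blast
    finally show ?thesis using \<omega> len \<open>t = n\<close> by (simp add: extend_outcome_def nth_append)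
  qed
qed simp

lemma reward_abs_le:
  assumes wf: "wf_game G" and "valid_profile G g" and \<omega>: "\<omega> \<in> set_pmf (play G g)" and t: "t < horizon G"
  shows "\<bar>reward G i \<omega> t\<bar> \<le> 1"
proof -
  obtain x h s where \<omega>s: "\<omega> = (x, h, s)" by (cases \<omega>) auto
  have "length s = horizon G" using outcome_len_run \<omega> \<omega>s by (fastforce simp: play_def outcome_len_def)
  then obtain x' where x': "snd (trace (dyn G) 0 x s ! t) =
      (fst (s ! t), snd (dyn G (0 + t) x' (fst (s ! t)) (snd (s ! t))))"
    using nth_trace t by metis
  have "fst (s ! t) j \<in> acts G t j" for j
    using action_in_acts_run[OF assms(2)] \<omega> t \<omega>s by (auto simp: play_def)
  then have "-1 \<le> snd (snd (dyn G t x' (fst (s ! t)) (snd (s ! t)))) i \<and>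
             snd (snd (dyn G t x' (fst (s ! t)) (snd (s ! t)))) i \<le> 1"
    using wf t unfolding wf_game_def Let_def by blast
  moreover have "reward G i \<omega> t = snd (snd (dyn G t x' (fst (s ! t)) (snd (s ! t)))) i"
    using x' unfolding reward_def traj_def \<omega>s by (simp add: case_prod_beta)
  ultimately show ?thesis by auto
qed

definition reward_to_go :: "('p,'x,'u,'y,'w,'h) game \<Rightarrow> 'p \<Rightarrow> nat \<Rightarrow> ('p,'x,'u,'w,'h) outcome \<Rightarrow> real" where
  "reward_to_go G i \<tau> \<omega> = (\<Sum>t\<in>{\<tau>..<horizon G}. reward G i \<omega> t)"

lemma reward_to_go_abs_le:
  assumes "wf_game G" and "valid_profile G g" and "\<omega> \<in> set_pmf (play G g)"
  shows "\<bar>reward_to_go G i \<tau> \<omega>\<bar> \<le> real (horizon G)"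
proof -
  have "\<bar>reward_to_go G i \<tau> \<omega>\<bar> \<le> (\<Sum>t\<in>{\<tau>..<horizon G}. 1)"
    unfolding reward_to_go_def
    using reward_abs_le[OF assms] by (intro order.trans[OF sum_abs sum_mono]) auto
  then show ?thesis by simp
qed

lemma pmf_run_Suc:
  fixes G :: "('p::finite,'x::finite,'u::finite,'y,'w::finite,'h::finite) game"
  shows "pmf (run G g (Suc t)) \<omega> =
    (\<Sum>\<omega>'\<in>{\<omega>'. outcome_len \<omega>' = t}. (\<Sum>u\<in>UNIV.
       pmf (map_pmf (extend_outcome \<omega>' u) (noise G t)) \<omega> * (\<Prod>i\<in>UNIV. pmf (g t i (hist G i \<omega>' t)) (u i)))
     * pmf (run G g t) \<omega>')"
proof -
  have "pmf (run G g (Suc t)) \<omega> = (\<integral>\<omega>'. pmf (bind_pmf (Pi_pmf UNIV undefined (\<lambda>i. g t i (hist G i \<omega>' t)))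
          (\<lambda>u. map_pmf (extend_outcome \<omega>' u) (noise G t))) \<omega> \<partial>run G g t)"
    unfolding run_Suc_extend by (rule pmf_bind)
  also have "\<dots> = (\<Sum>\<omega>'\<in>{\<omega>'. outcome_len \<omega>' = t}. pmf (bind_pmf (Pi_pmf UNIV undefined (\<lambda>i. g t i (hist G i \<omega>' t)))
          (\<lambda>u. map_pmf (extend_outcome \<omega>' u) (noise G t))) \<omega> * pmf (run G g t) \<omega>')"
    by (rule integral_measure_pmf_real[OF finite_outcome_len]) (auto dest: outcome_len_run)
  also have "\<dots> = (\<Sum>\<omega>'\<in>{\<omega>'. outcome_len \<omega>' = t}. (\<Sum>u\<in>UNIV.
       pmf (map_pmf (extend_outcome \<omega>' u) (noise G t)) \<omega> * (\<Prod>i\<in>UNIV. pmf (g t i (hist G i \<omega>' t)) (u i)))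
     * pmf (run G g t) \<omega>')"
  proof (rule sum.cong[OF refl])
    fix \<omega>'
    have "pmf (bind_pmf (Pi_pmf UNIV undefined (\<lambda>i. g t i (hist G i \<omega>' t)))
          (\<lambda>u. map_pmf (extend_outcome \<omega>' u) (noise G t))) \<omega> =
        (\<Sum>u\<in>UNIV. pmf (map_pmf (extend_outcome \<omega>' u) (noise G t)) \<omega> *
           pmf (Pi_pmf UNIV undefined (\<lambda>i. g t i (hist G i \<omega>' t))) u)"
      unfolding pmf_bind by (rule integral_measure_pmf_real) auto
    also have "\<dots> = (\<Sum>u\<in>UNIV. pmf (map_pmf (extend_outcome \<omega>' u) (noise G t)) \<omega> *
                       (\<Prod>i\<in>UNIV. pmf (g t i (hist G i \<omega>' t)) (u i)))"
      by (rule sum.cong[OF refl]) (subst pmf_Pi', auto)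
    finally show "pmf (bind_pmf (Pi_pmf UNIV undefined (\<lambda>i. g t i (hist G i \<omega>' t)))
          (\<lambda>u. map_pmf (extend_outcome \<omega>' u) (noise G t))) \<omega> * pmf (run G g t) \<omega>' =
       (\<Sum>u\<in>UNIV. pmf (map_pmf (extend_outcome \<omega>' u) (noise G t)) \<omega> *
          (\<Prod>i\<in>UNIV. pmf (g t i (hist G i \<omega>' t)) (u i))) * pmf (run G g t) \<omega>'"
      by simp
  qed
  finally show ?thesis .
qed

lemma tendsto_pmf_run:
  fixes G :: "('p::finite,'x::finite,'u::finite,'y,'w::finite,'h::finite) game"
  assumes "\<And>t i h u. (\<lambda>n. pmf (gs n t i h) u) \<longlonglongrightarrow> pmf (g t i h) u"
  shows "(\<lambda>n. pmf (run G (gs n) t) \<omega>) \<longlonglongrightarrow> pmf (run G g t) \<omega>"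
proof (induction t arbitrary: \<omega>)
  case (Suc t)
  show ?case unfolding pmf_run_Suc by (intro tendsto_intros assms Suc.IH)
qed simp

lemma tendsto_integral_run:
  fixes G :: "('p::finite,'x::finite,'u::finite,'y,'w::finite,'h::finite) game"
    and F :: "('p,'x,'u,'w,'h) outcome \<Rightarrow> real"
  assumes "\<And>t i h u. (\<lambda>n. pmf (gs n t i h) u) \<longlonglongrightarrow> pmf (g t i h) u"
  shows "(\<lambda>n. \<integral>\<omega>. F \<omega> \<partial>run G (gs n) t) \<longlonglongrightarrow> (\<integral>\<omega>. F \<omega> \<partial>run G g t)"
proof -
  have "(\<integral>\<omega>. F \<omega> \<partial>run G g' t) = (\<Sum>\<omega>\<in>{\<omega>. outcome_len \<omega> = t}. F \<omega> * pmf (run G g' t) \<omega>)" for g'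
    by (rule integral_measure_pmf_real[OF finite_outcome_len]) (auto dest: outcome_len_run)
  then show ?thesis by (simp only:) (intro tendsto_intros tendsto_pmf_run assms)
qed

lemma set_pmf_run_cong:
  assumes "\<And>t i h. t < horizon G \<Longrightarrow> set_pmf (g t i h) = set_pmf (g' t i h)" and "n \<le> horizon G"
  shows "set_pmf (run G g n) = set_pmf (run G g' n)"
  using assms(2)
proof (induction n)
  case (Suc n)
  then have "n < horizon G" by simp
  then have "set_pmf (Pi_pmf UNIV undefined (\<lambda>i. g n i (hist G i \<omega> n))) =
        set_pmf (Pi_pmf UNIV undefined (\<lambda>i. g' n i (hist G i \<omega> n)))" for \<omega>
    by (simp add: set_Pi_pmf o_def assms(1))
  with Suc show ?case by simp
qed simp

section \<open>Values under \<open>K\<close>-based profiles\<close>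

lemma reward_to_go_Suc:
  "\<tau> < horizon G \<Longrightarrow> reward_to_go G i \<tau> \<omega> = reward G i \<omega> \<tau> + reward_to_go G i (Suc \<tau>) \<omega>"
  unfolding reward_to_go_def by (simp add: sum.atLeast_Suc_lessThan)

lemma reward_to_go_last:
  assumes "Suc \<tau> = horizon G"
  shows "reward_to_go G i \<tau> \<omega> = reward G i \<omega> \<tau>"
proof -
  have "{\<tau>..<horizon G} = {\<tau>}" using assms by auto
  then show ?thesis by (simp add: reward_to_go_def)
qed

text \<open>\<open>P\<close> and \<open>r\<close> are the kernels \<open>P\<^sub>t\<^sup>i\<close> and \<open>r\<^sub>t\<^sup>i\<close> of the information-state property of
  \<open>K\<^sup>i\<close> under the \<open>K\<close>-based profile \<open>\<rho>\<close>, specialised to player \<open>i\<close>'s own strategy \<open>\<rho>\<^sup>i\<close>.\<close>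

locale kbased_info_kernels =
  fixes G :: "('p::finite,'x::finite,'u::finite,'y,'w::finite,'h::finite) game"
    and io1 :: "'p \<Rightarrow> 'h \<Rightarrow> 'k::finite" and io :: "nat \<Rightarrow> 'p \<Rightarrow> 'k \<Rightarrow> ('u \<times> 'y) \<Rightarrow> 'k"
    and \<rho> :: "nat \<Rightarrow> 'p \<Rightarrow> 'k \<Rightarrow> 'u pmf" and i :: 'p
    and P :: "nat \<Rightarrow> 'k \<Rightarrow> 'u \<Rightarrow> 'k pmf" and r :: "nat \<Rightarrow> 'k \<Rightarrow> 'u \<Rightarrow> real"
  assumes P_law: "\<And>t h u k'. Suc t < horizon G \<Longrightarrow>
      measure_pmf.prob (play G (kbased io1 io \<rho>)) (hu_event G t i h u) > 0 \<Longrightarrow>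
      cond_exp (play G (kbased io1 io \<rho>)) (hu_event G t i h u)
        (indicator {\<omega>. compress io1 io i (hist G i \<omega> (Suc t)) = k'}) = pmf (P t (compress io1 io i h) u) k'"
    and r_law: "\<And>t h u. t < horizon G \<Longrightarrow>
      measure_pmf.prob (play G (kbased io1 io \<rho>)) (hu_event G t i h u) > 0 \<Longrightarrow>
      cond_exp (play G (kbased io1 io \<rho>)) (hu_event G t i h u) (\<lambda>\<omega>. reward G i \<omega> t) =
        r t (compress io1 io i h) u"
begin

abbreviation law :: "('p,'x,'u,'w,'h) outcome pmf" where
  "law \<equiv> play G (kbased io1 io \<rho>)"

abbreviation state :: "nat \<Rightarrow> ('p,'x,'u,'w,'h) outcome \<Rightarrow> 'k" where
  "state t \<omega> \<equiv> compress io1 io i (hist G i \<omega> t)"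

lemma indicator_hu_event_law:
  assumes "\<tau> < horizon G" "\<omega> \<in> set_pmf law"
  shows "indicator (hu_event G \<tau> i h u) \<omega> = (if hist_step h u (hist G i \<omega> (Suc \<tau>)) then 1 else (0::real))"
proof -
  have "\<tau> < outcome_len \<omega>"
    using assms outcome_len_run[of \<omega> G "kbased io1 io \<rho>" "horizon G"] by (simp add: play_def)
  then show ?thesis using hu_event_iff_hist_step[of \<tau> \<omega> G i h u] by (simp add: indicator_def)
qed

lemma integral_law_hu_event_cong:
  fixes X :: "('p,'x,'u,'w,'h) outcome \<Rightarrow> real"
  assumes "\<tau> < horizon G"
  shows "(\<integral>\<omega>. indicator (hu_event G \<tau> i h u) \<omega> * X \<omega> \<partial>law) =
         (\<integral>\<omega>. (if hist_step h u (hist G i \<omega> (Suc \<tau>)) then 1 else 0) * X \<omega> \<partial>law)"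
  using indicator_hu_event_law[OF assms]
  by (intro integral_cong_AE) (simp_all add: AE_measure_pmf_iff)

lemma integral_hu_event_next_state:
  fixes g :: "'k \<Rightarrow> real"
  assumes \<tau>: "Suc \<tau> < horizon G" and pos: "measure_pmf.prob law (hu_event G \<tau> i h u) > 0"
  shows "(\<integral>\<omega>. indicator (hu_event G \<tau> i h u) \<omega> * g (state (Suc \<tau>) \<omega>) \<partial>law) =
    measure_pmf.prob law (hu_event G \<tau> i h u) * (\<Sum>k'\<in>UNIV. pmf (P \<tau> (compress io1 io i h) u) k' * g k')"
proof -
  let ?A = "hu_event G \<tau> i h u"
  have "indicator ?A \<omega> * g (state (Suc \<tau>) \<omega>) =
      (\<Sum>k'\<in>UNIV. g k' * (indicator ?A \<omega> * indicator {\<omega>. state (Suc \<tau>) \<omega> = k'} \<omega>))" for \<omega>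
  proof -
    have "(\<Sum>k'\<in>UNIV. g k' * (indicator ?A \<omega> * indicator {\<omega>. state (Suc \<tau>) \<omega> = k'} \<omega>)) =
        (\<Sum>k'\<in>UNIV. if state (Suc \<tau>) \<omega> = k' then g k' * indicator ?A \<omega> else 0)"
      by (intro sum.cong) (auto simp: indicator_def)
    then show ?thesis by (simp add: mult.commute)
  qed
  moreover have "finite (set_pmf law)" unfolding play_def by (rule finite_set_run)
  ultimately have "(\<integral>\<omega>. indicator ?A \<omega> * g (state (Suc \<tau>) \<omega>) \<partial>law) =
      (\<Sum>k'\<in>UNIV. g k' * (\<integral>\<omega>. indicator ?A \<omega> * indicator {\<omega>. state (Suc \<tau>) \<omega> = k'} \<omega> \<partial>law))"
    by (simp add: integral_sum integrable_measure_pmf_finite)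
  also have "\<dots> = (\<Sum>k'\<in>UNIV. g k' * (measure_pmf.prob law ?A * pmf (P \<tau> (compress io1 io i h) u) k'))"
    using P_law[OF \<tau> pos] by (simp add: integral_indicator_eq_cond_exp[OF pos])
  finally show ?thesis by (simp add: sum_distrib_left mult_ac)
qed

lemma integral_hu_event_next_value:
  fixes w :: "'k \<Rightarrow> 'u \<Rightarrow> real"
  assumes \<tau>: "Suc \<tau> < horizon G"
    and w: "\<And>h' u'. measure_pmf.prob law (hu_event G (Suc \<tau>) i h' u') > 0 \<Longrightarrow>
      cond_exp law (hu_event G (Suc \<tau>) i h' u') (reward_to_go G i (Suc \<tau>)) = w (compress io1 io i h') u'"
  shows "(\<integral>\<omega>. indicator (hu_event G \<tau> i h u) \<omega> * reward_to_go G i (Suc \<tau>) \<omega> \<partial>law) =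
    (\<integral>\<omega>. indicator (hu_event G \<tau> i h u) \<omega> * (\<integral>u'. w (state (Suc \<tau>) \<omega>) u' \<partial>\<rho> (Suc \<tau>) i (state (Suc \<tau>) \<omega>)) \<partial>law)"
proof -
  define \<phi> where "\<phi> h' = (if hist_step h u h' then 1 else (0::real))" for h'
  have fin: "finite (set_pmf law)" unfolding play_def by (rule finite_set_run)
  have "(\<integral>\<omega>. indicator (hu_event G \<tau> i h u) \<omega> * reward_to_go G i (Suc \<tau>) \<omega> \<partial>law) =
        (\<integral>\<omega>. \<phi> (hist G i \<omega> (Suc \<tau>)) * reward_to_go G i (Suc \<tau>) \<omega> \<partial>law)"
    unfolding \<phi>_def using \<tau> by (intro integral_law_hu_event_cong) simp
  also have "\<dots> = (\<integral>\<omega>. \<phi> (hist G i \<omega> (Suc \<tau>)) * w (state (Suc \<tau>) \<omega>) (action \<omega> (Suc \<tau>) i) \<partial>law)"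
  proof (rule integral_mult_cond_exp_fibres[OF fin, where key = "\<lambda>\<omega>. (hist G i \<omega> (Suc \<tau>), action \<omega> (Suc \<tau>) i)"
        and \<phi> = "\<lambda>(h', u'). \<phi> h'" and c = "\<lambda>(h', u'). w (compress io1 io i h') u'", simplified])
    fix a :: "('h,'u,'y) hist \<times> 'u"
    have "{\<omega>. (hist G i \<omega> (Suc \<tau>), action \<omega> (Suc \<tau>) i) = a} = hu_event G (Suc \<tau>) i (fst a) (snd a)"
      by (auto simp: hu_event_def)
    then show "measure_pmf.prob law {\<omega>. (hist G i \<omega> (Suc \<tau>), action \<omega> (Suc \<tau>) i) = a} > 0 \<Longrightarrow>
        cond_exp law {\<omega>. (hist G i \<omega> (Suc \<tau>), action \<omega> (Suc \<tau>) i) = a} (reward_to_go G i (Suc \<tau>)) =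
        (case a of (h', u') \<Rightarrow> w (compress io1 io i h') u')"
      using w by (cases a) simp
  qed
  also have "\<dots> = (\<integral>\<omega>. \<phi> (hist G i \<omega> (Suc \<tau>)) *
      (\<integral>u'. w (state (Suc \<tau>) \<omega>) u' \<partial>\<rho> (Suc \<tau>) i (state (Suc \<tau>) \<omega>)) \<partial>law)"
    using integral_run_action[OF \<tau>, where F = "\<lambda>h' u'. \<phi> h' * w (compress io1 io i h') u'"]
    by (simp add: play_def kbased_def)
  finally show ?thesis
    unfolding \<phi>_def using \<tau> by (simp add: integral_law_hu_event_cong)
qed

lemma kbased_value_step:
  fixes w :: "'k \<Rightarrow> 'u \<Rightarrow> real"
  assumes \<tau>: "Suc \<tau> < horizon G"
    and w: "\<And>h' u'. measure_pmf.prob law (hu_event G (Suc \<tau>) i h' u') > 0 \<Longrightarrow>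
      cond_exp law (hu_event G (Suc \<tau>) i h' u') (reward_to_go G i (Suc \<tau>)) = w (compress io1 io i h') u'"
    and pos: "measure_pmf.prob law (hu_event G \<tau> i h u) > 0"
  shows "cond_exp law (hu_event G \<tau> i h u) (reward_to_go G i \<tau>) =
    r \<tau> (compress io1 io i h) u +
    (\<Sum>k'\<in>UNIV. pmf (P \<tau> (compress io1 io i h) u) k' * (\<integral>u'. w k' u' \<partial>\<rho> (Suc \<tau>) i k'))"
proof -
  define A where "A = hu_event G \<tau> i h u"
  define k where "k = compress io1 io i h"
  define \<psi> where "\<psi> k' = (\<integral>u'. w k' u' \<partial>\<rho> (Suc \<tau>) i k')" for k'
  have next_value: "(\<integral>\<omega>. indicator A \<omega> * reward_to_go G i (Suc \<tau>) \<omega> \<partial>law) =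
      measure_pmf.prob law A * (\<Sum>k'\<in>UNIV. pmf (P \<tau> k u) k' * \<psi> k')"
    using integral_hu_event_next_value[OF \<tau> w, of h u] integral_hu_event_next_state[OF \<tau> pos, where g = \<psi>]
    unfolding A_def k_def \<psi>_def by simp
  have reward_now: "(\<integral>\<omega>. indicator A \<omega> * reward G i \<omega> \<tau> \<partial>law) = measure_pmf.prob law A * r \<tau> k u"
    using r_law[of \<tau> h u] \<tau> pos by (simp add: A_def k_def integral_indicator_eq_cond_exp)
  have "finite (set_pmf law)" unfolding play_def by (rule finite_set_run)
  with \<tau> have "(\<integral>\<omega>. indicator A \<omega> * reward_to_go G i \<tau> \<omega> \<partial>law) =
        (\<integral>\<omega>. indicator A \<omega> * reward G i \<omega> \<tau> \<partial>law) +
        (\<integral>\<omega>. indicator A \<omega> * reward_to_go G i (Suc \<tau>) \<omega> \<partial>law)"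
    by (simp add: reward_to_go_Suc distrib_left integrable_measure_pmf_finite)
  also have "\<dots> = measure_pmf.prob law A * (r \<tau> k u + (\<Sum>k'\<in>UNIV. pmf (P \<tau> k u) k' * \<psi> k'))"
    by (simp only: reward_now next_value distrib_left)
  finally show ?thesis
    using pos unfolding cond_exp_def A_def k_def \<psi>_def by simp
qed

lemma kbased_value_exists:
  obtains v where "\<And>\<tau> h u. \<tau> < horizon G \<Longrightarrow> measure_pmf.prob law (hu_event G \<tau> i h u) > 0 \<Longrightarrow>
    cond_exp law (hu_event G \<tau> i h u) (reward_to_go G i \<tau>) = v \<tau> (compress io1 io i h) u"
proof -
  have "\<exists>w. \<forall>h u. measure_pmf.prob law (hu_event G \<tau> i h u) > 0 \<longrightarrow>
      cond_exp law (hu_event G \<tau> i h u) (reward_to_go G i \<tau>) = w (compress io1 io i h) u"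
    if "\<tau> < horizon G" for \<tau>
  proof -
    have last: "Suc (horizon G - 1) = horizon G" using that by simp
    from that have "\<tau> \<le> horizon G - 1" by simp
    then show ?thesis
    proof (induction rule: inc_induct)
      case base
      have "cond_exp law (hu_event G (horizon G - 1) i h u) (reward_to_go G i (horizon G - 1)) =
          r (horizon G - 1) (compress io1 io i h) u"
        if "measure_pmf.prob law (hu_event G (horizon G - 1) i h u) > 0" for h u
      proof -
        have "reward_to_go G i (horizon G - 1) = (\<lambda>\<omega>. reward G i \<omega> (horizon G - 1))"
          by (rule ext) (rule reward_to_go_last[OF last])
        then show ?thesis using r_law[OF _ that] last by simp
      qed
      then show ?case by blast
    next
      case (step n)
      then obtain w where w: "\<And>h u. measure_pmf.prob law (hu_event G (Suc n) i h u) > 0 \<Longrightarrow>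
          cond_exp law (hu_event G (Suc n) i h u) (reward_to_go G i (Suc n)) = w (compress io1 io i h) u"
        by blast
      have "Suc n < horizon G" using step.hyps(2) last by linarith
      show ?case
        by (intro exI[of _ "\<lambda>k u. r n k u + (\<Sum>k'\<in>UNIV. pmf (P n k u) k' * (\<integral>u'. w k' u' \<partial>\<rho> (Suc n) i k'))"]
            allI impI) (simp add: kbased_value_step[OF \<open>Suc n < horizon G\<close> w])
    qed
  qed
  then obtain v where "\<And>\<tau>. \<tau> < horizon G \<Longrightarrow> \<forall>h u. measure_pmf.prob law (hu_event G \<tau> i h u) > 0 \<longrightarrow>
      cond_exp law (hu_event G \<tau> i h u) (reward_to_go G i \<tau>) = v \<tau> (compress io1 io i h) u"
    by metis
  then show thesis using that by blast
qed

end

lemma mutually_sufficient_value: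
  fixes G :: "('p::finite,'x::finite,'u::finite,'y,'w::finite,'h::finite) game"
    and io1 :: "'p \<Rightarrow> 'h \<Rightarrow> 'k::finite"
  assumes "valid_kstrat G \<rho>" and "info_state G io1 io i (kbased io1 io \<rho>)"
  obtains v where "\<And>\<tau> h u. \<tau> < horizon G \<Longrightarrow>
      measure_pmf.prob (play G (kbased io1 io \<rho>)) (hu_event G \<tau> i h u) > 0 \<Longrightarrow>
      cond_exp (play G (kbased io1 io \<rho>)) (hu_event G \<tau> i h u) (reward_to_go G i \<tau>) =
        v \<tau> (compress io1 io i h) u"
proof -
  let ?g = "kbased io1 io \<rho>"
  have own: "upd_player ?g i (\<lambda>t. ?g t i) = ?g"
    by (auto simp: upd_player_def fun_eq_iff)
  have valid: "\<And>t h. t < horizon G \<Longrightarrow> set_pmf (?g t i h) \<subseteq> acts G t i"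
    using assms(1) unfolding valid_kstrat_def kbased_def by blast
  obtain P :: "nat \<Rightarrow> 'k \<Rightarrow> 'u \<Rightarrow> 'k pmf" and r where PR: "\<forall>gi. (\<forall>t<horizon G. \<forall>h. set_pmf (gi t h) \<subseteq> acts G t i) \<longrightarrow>
      (let M = play G (upd_player ?g i gi) in
       \<forall>t<horizon G. \<forall>h u. measure_pmf.prob M (hu_event G t i h u) > 0 \<longrightarrow>
         (Suc t < horizon G \<longrightarrow> (\<forall>k'. cond_exp M (hu_event G t i h u)
              (\<lambda>\<omega>. indicator {\<omega>. compress io1 io i (hist G i \<omega> (Suc t)) = k'} \<omega>)
            = pmf (P t (compress io1 io i h) u) k')) \<and>
         cond_exp M (hu_event G t i h u) (\<lambda>\<omega>. reward G i \<omega> t) = r t (compress io1 io i h) u)"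
    using assms(2) unfolding info_state_def by blast
  have laws: "\<forall>t<horizon G. \<forall>h u. measure_pmf.prob (play G ?g) (hu_event G t i h u) > 0 \<longrightarrow>
         (Suc t < horizon G \<longrightarrow> (\<forall>k'. cond_exp (play G ?g) (hu_event G t i h u)
              (\<lambda>\<omega>. indicator {\<omega>. compress io1 io i (hist G i \<omega> (Suc t)) = k'} \<omega>)
            = pmf (P t (compress io1 io i h) u) k')) \<and>
         cond_exp (play G ?g) (hu_event G t i h u) (\<lambda>\<omega>. reward G i \<omega> t) = r t (compress io1 io i h) u"
    using mp[OF spec[OF PR, of "\<lambda>t. ?g t i"]] valid unfolding own Let_def by blast
  have "kbased_info_kernels G io1 io \<rho> i P r"
    by unfold_locales (use laws Suc_lessD in blast)+
  then interpret kbased_info_kernels G io1 io \<rho> i P r .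
  from kbased_value_exists that show thesis by blast
qed

section \<open>Logit equilibria\<close>

text \<open>A continuous retraction onto the probability simplex on \<open>S\<close>: the positive part, with any
  deficit of its total below 1 spread uniformly over \<open>S\<close>.\<close>

definition simplex_retract :: "'u set \<Rightarrow> ('u \<Rightarrow> real) \<Rightarrow> 'u \<Rightarrow> real" where
  "simplex_retract S y u = (let p = (\<Sum>v\<in>S. max (y v) 0); d = max 0 (1 - p) in
     (max (y u) 0 + d / real (card S)) / (p + d))"

lemma simplex_retract_nonneg: "0 \<le> simplex_retract S y u"
proof -
  have "1 \<le> (\<Sum>v\<in>S. max (y v) 0) + max 0 (1 - (\<Sum>v\<in>S. max (y v) 0))" by simp
  then show ?thesis unfolding simplex_retract_def Let_def by (intro divide_nonneg_pos) auto
qed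

lemma sum_simplex_retract:
  assumes "finite S" "S \<noteq> {}"
  shows "(\<Sum>u\<in>S. simplex_retract S y u) = 1"
proof -
  define p where "p = (\<Sum>v\<in>S. max (y v) 0)"
  define d where "d = max 0 (1 - p)"
  have "1 \<le> p + d" unfolding d_def by simp
  moreover have "(\<Sum>u\<in>S. max (y u) 0 + d / real (card S)) = p + d"
    using assms by (simp add: sum.distrib p_def card_gt_0_iff)
  ultimately show ?thesis
    unfolding simplex_retract_def Let_def p_def[symmetric] d_def[symmetric] by (simp add: sum_divide_distrib[symmetric])
qed

lemma simplex_retract_id:
  assumes "\<And>v. v \<in> S \<Longrightarrow> 0 \<le> y v" "(\<Sum>v\<in>S. y v) = 1" "u \<in> S"
  shows "simplex_retract S y u = y u"
proof -
  have "(\<Sum>v\<in>S. max (y v) 0) = 1" using assms(1,2) by (simp add: max_absorb1 cong: sum.cong)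
  then show ?thesis unfolding simplex_retract_def Let_def using assms(1,3) by (simp add: max_absorb1)
qed

lemma tendsto_simplex_retract:
  assumes "finite S" and Y: "\<And>v. v \<in> S \<Longrightarrow> (\<lambda>n. Y n v) \<longlonglongrightarrow> y v" and "u \<in> S"
  shows "(\<lambda>n. simplex_retract S (Y n) u) \<longlonglongrightarrow> simplex_retract S y u"
proof -
  have "(\<Sum>v\<in>S. max (y v) 0) + max 0 (1 - (\<Sum>v\<in>S. max (y v) 0)) \<noteq> 0" by linarith
  moreover have "real (card S) \<noteq> 0" using assms(1,3) by (auto simp: card_eq_0_iff)
  ultimately show ?thesis
    unfolding simplex_retract_def Let_def
    by (intro tendsto_divide tendsto_add tendsto_max tendsto_const tendsto_diff tendsto_sum Y \<open>u \<in> S\<close>)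
qed

lemma exp_neg_linear_tendsto_0:
  fixes d :: real
  assumes "0 < d"
  shows "(\<lambda>n. exp (- (real n * d))) \<longlonglongrightarrow> 0"
proof -
  have "(\<lambda>n. exp (- d) ^ n) \<longlonglongrightarrow> 0" using assms by (intro LIMSEQ_power_zero) simp
  moreover have "exp (- (real n * d)) = exp (- d) ^ n" for n
    by (simp add: exp_of_nat_mult[symmetric])
  ultimately show ?thesis by simp
qed

text \<open>A \<open>K\<close>-based strategy profile \<open>\<rho>\<close> is encoded as the vector \<open>z (t, i, k, u) = \<rho> t i k u\<close>,
  supported on the finite set \<open>coords\<close>.\<close>

locale msi_game =
  fixes G :: "('p::finite,'x::finite,'u::finite,'y,'w::finite,'h::finite) game"
    and io1 :: "'p \<Rightarrow> 'h \<Rightarrow> 'k::finite" and io :: "nat \<Rightarrow> 'p \<Rightarrow> 'k \<Rightarrow> ('u \<times> 'y) \<Rightarrow> 'k"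
  assumes wf: "wf_game G" and msi: "mutually_sufficient G io1 io"
begin

definition coords :: "(nat \<times> 'p \<times> 'k \<times> 'u) set" where
  "coords = {(t, i, k, u). t < horizon G \<and> u \<in> acts G t i}"

definition strategy_vecs :: "(nat \<times> 'p \<times> 'k \<times> 'u \<Rightarrow> real) set" where
  "strategy_vecs = {z. (\<forall>a. a \<notin> coords \<longrightarrow> z a = 0) \<and> (\<forall>a\<in>coords. 0 \<le> z a) \<and>
                      (\<forall>t<horizon G. \<forall>i k. (\<Sum>u\<in>acts G t i. z (t, i, k, u)) = 1)}"

definition strategy_vecs_ge :: "real \<Rightarrow> (nat \<times> 'p \<times> 'k \<times> 'u \<Rightarrow> real) set" where
  "strategy_vecs_ge c = {z \<in> strategy_vecs. \<forall>a\<in>coords. c \<le> z a}"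

definition fully_mixed_vec :: "(nat \<times> 'p \<times> 'k \<times> 'u \<Rightarrow> real) \<Rightarrow> bool" where
  "fully_mixed_vec z \<longleftrightarrow> z \<in> strategy_vecs \<and> (\<forall>a\<in>coords. 0 < z a)"

definition vec_kstrat :: "(nat \<times> 'p \<times> 'k \<times> 'u \<Rightarrow> real) \<Rightarrow> nat \<Rightarrow> 'p \<Rightarrow> 'k \<Rightarrow> 'u pmf" where
  "vec_kstrat z t i k = embed_pmf (\<lambda>u. z (t, i, k, u))"

definition vec_profile :: "(nat \<times> 'p \<times> 'k \<times> 'u \<Rightarrow> real) \<Rightarrow> ('p,'h,'u,'y) profile" where
  "vec_profile z = kbased io1 io (vec_kstrat z)"

definition n_acts :: "nat \<Rightarrow> 'p \<Rightarrow> real" where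
  "n_acts t i = real (card (acts G t i))"

lemma acts_nonempty: "t < horizon G \<Longrightarrow> acts G t i \<noteq> {}"
  using wf unfolding wf_game_def by auto

lemma n_acts_ge_1: "t < horizon G \<Longrightarrow> 1 \<le> n_acts t i"
  using acts_nonempty[of t i] unfolding n_acts_def
  by (metis One_nat_def Suc_leI card_gt_0_iff finite of_nat_1 of_nat_le_iff)

lemma n_acts_le_card: "n_acts t i \<le> real CARD('u)"
  unfolding n_acts_def by (simp add: card_mono)

lemma finite_coords: "finite coords"
  by (rule finite_subset[of _ "{..<horizon G} \<times> UNIV"]) (auto simp: coords_def)

lemma strategy_vecs_outside: "z \<in> strategy_vecs \<Longrightarrow> a \<notin> coords \<Longrightarrow> z a = 0"
  unfolding strategy_vecs_def by blast

lemma strategy_vecs_nonneg: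
  assumes "z \<in> strategy_vecs"
  shows "0 \<le> z a"
proof (cases "a \<in> coords")
  case True
  then show ?thesis using assms unfolding strategy_vecs_def by blast
qed (simp add: strategy_vecs_outside[OF assms])

lemma strategy_vecs_le_1:
  assumes "z \<in> strategy_vecs"
  shows "z a \<le> 1"
proof (cases "a \<in> coords")
  case True
  obtain t i k u where a: "a = (t, i, k, u)" by (cases a) auto
  then have "t < horizon G" "u \<in> acts G t i" using True unfolding coords_def by auto
  then have "z (t, i, k, u) \<le> (\<Sum>u'\<in>acts G t i. z (t, i, k, u'))"
    using assms by (intro member_le_sum) (auto simp: strategy_vecs_nonneg)
  also have "\<dots> = 1" using assms \<open>t < horizon G\<close> unfolding strategy_vecs_def by auto
  finally show ?thesis using a by simp
qed (simp add: strategy_vecs_outside[OF assms])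

lemma strategy_vecs_unit_cube: "z \<in> strategy_vecs \<Longrightarrow> z \<in> unit_cube coords"
  unfolding unit_cube_def by (auto simp: strategy_vecs_nonneg strategy_vecs_le_1 strategy_vecs_outside)

lemma fully_mixed_vec_ge: "0 < c \<Longrightarrow> z \<in> strategy_vecs_ge c \<Longrightarrow> fully_mixed_vec z"
  unfolding strategy_vecs_ge_def fully_mixed_vec_def by force

lemma pmf_vec_kstrat:
  assumes "z \<in> strategy_vecs" "t < horizon G"
  shows "pmf (vec_kstrat z t i k) u = z (t, i, k, u)"
proof -
  have nonneg: "0 \<le> z (t, i, k, u')" for u' by (rule strategy_vecs_nonneg[OF assms(1)])
  have "(\<Sum>u'\<in>UNIV. z (t, i, k, u')) = (\<Sum>u'\<in>acts G t i. z (t, i, k, u'))"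
    by (rule sum.mono_neutral_right) (auto simp: coords_def intro!: strategy_vecs_outside[OF assms(1)])
  also have "\<dots> = 1" using assms unfolding strategy_vecs_def by blast
  finally have "(\<integral>\<^sup>+u'. ennreal (z (t, i, k, u')) \<partial>count_space UNIV) = 1"
    using nonneg by (simp add: nn_integral_count_space_finite sum_ennreal)
  then show ?thesis
    unfolding vec_kstrat_def using pmf_embed_pmf[of "\<lambda>u. z (t, i, k, u)"] nonneg by blast
qed

lemma pmf_vec_profile:
  "z \<in> strategy_vecs \<Longrightarrow> t < horizon G \<Longrightarrow> pmf (vec_profile z t i h) u = z (t, i, compress io1 io i h, u)"
  unfolding vec_profile_def kbased_def by (rule pmf_vec_kstrat)

lemma set_pmf_vec_kstrat:
  assumes "z \<in> strategy_vecs" "t < horizon G"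
  shows "set_pmf (vec_kstrat z t i k) \<subseteq> acts G t i"
  using strategy_vecs_outside[OF assms(1)] assms(2)
  by (auto simp: set_pmf_eq pmf_vec_kstrat[OF assms] coords_def)

lemma set_pmf_vec_kstrat_mixed:
  assumes "fully_mixed_vec z" "t < horizon G"
  shows "set_pmf (vec_kstrat z t i k) = acts G t i"
proof -
  have z: "z \<in> strategy_vecs" using assms(1) unfolding fully_mixed_vec_def by simp
  have "u \<in> set_pmf (vec_kstrat z t i k)" if "u \<in> acts G t i" for u
  proof -
    have "(t, i, k, u) \<in> coords" using that assms(2) unfolding coords_def by simp
    then have "z (t, i, k, u) > 0" using assms(1) unfolding fully_mixed_vec_def by blast
    then show ?thesis by (simp add: set_pmf_eq pmf_vec_kstrat[OF z assms(2)])
  qed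
  then have "acts G t i \<subseteq> set_pmf (vec_kstrat z t i k)" by blast
  with set_pmf_vec_kstrat[OF z assms(2)] show ?thesis by blast
qed

lemma valid_kstrat_vec: "z \<in> strategy_vecs \<Longrightarrow> valid_kstrat G (vec_kstrat z)"
  unfolding valid_kstrat_def using set_pmf_vec_kstrat by blast

lemma valid_profile_vec: "z \<in> strategy_vecs \<Longrightarrow> valid_profile G (vec_profile z)"
  unfolding valid_profile_def vec_profile_def kbased_def using set_pmf_vec_kstrat by blast

lemma fully_mixed_vec_profile: "fully_mixed_vec z \<Longrightarrow> fully_mixed G (vec_profile z)"
  unfolding fully_mixed_def vec_profile_def kbased_def using set_pmf_vec_kstrat_mixed by blast

text \<open>All fully mixed profiles reach the same histories, so reachability does not depend on the profile.\<close>

definition reachable :: "nat \<Rightarrow> 'p \<Rightarrow> ('h,'u,'y) hist \<Rightarrow> bool" where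
  "reachable t i h \<longleftrightarrow>
     (\<exists>z. fully_mixed_vec z \<and> measure_pmf.prob (play G (vec_profile z)) {\<omega>. hist G i \<omega> t = h} > 0)"

lemma set_pmf_play_mixed:
  assumes "fully_mixed_vec z" "fully_mixed_vec z'"
  shows "set_pmf (play G (vec_profile z)) = set_pmf (play G (vec_profile z'))"
  unfolding play_def vec_profile_def kbased_def
  by (rule set_pmf_run_cong) (simp_all add: set_pmf_vec_kstrat_mixed[OF assms(1)] set_pmf_vec_kstrat_mixed[OF assms(2)])

lemma prob_hist_pos_iff_reachable:
  assumes "fully_mixed_vec z"
  shows "measure_pmf.prob (play G (vec_profile z)) {\<omega>. hist G i \<omega> t = h} > 0 \<longleftrightarrow> reachable t i h"
proof
  assume "reachable t i h"
  then obtain z' where z': "fully_mixed_vec z'"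
    and "measure_pmf.prob (play G (vec_profile z')) {\<omega>. hist G i \<omega> t = h} > 0"
    unfolding reachable_def by blast
  then have "set_pmf (play G (vec_profile z')) \<inter> {\<omega>. hist G i \<omega> t = h} \<noteq> {}"
    by (simp add: measure_pmf_zero_iff[symmetric])
  then obtain \<omega> where "\<omega> \<in> set_pmf (play G (vec_profile z'))" "hist G i \<omega> t = h"
    by blast
  then show "measure_pmf.prob (play G (vec_profile z)) {\<omega>. hist G i \<omega> t = h} > 0"
    using set_pmf_play_mixed[OF assms z'] by (intro measure_pmf_posI) auto
qed (use assms in \<open>unfold reachable_def, blast\<close>)

lemma prob_hu_event_pos_iff:
  assumes "fully_mixed_vec z" "t < horizon G"
  shows "measure_pmf.prob (play G (vec_profile z)) (hu_event G t i h u) > 0 \<longleftrightarrow> reachable t i h \<and> u \<in> acts G t i"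
proof -
  have z: "z \<in> strategy_vecs" using assms(1) unfolding fully_mixed_vec_def by simp
  have "z (t, i, compress io1 io i h, u) > 0 \<longleftrightarrow> u \<in> acts G t i"
  proof
    assume "u \<in> acts G t i"
    then have "(t, i, compress io1 io i h, u) \<in> coords" using assms(2) unfolding coords_def by simp
    then show "z (t, i, compress io1 io i h, u) > 0" using assms(1) unfolding fully_mixed_vec_def by blast
  next
    assume "z (t, i, compress io1 io i h, u) > 0"
    then have "(t, i, compress io1 io i h, u) \<in> coords" using strategy_vecs_outside[OF z] by force
    then show "u \<in> acts G t i" unfolding coords_def by simp
  qed
  moreover have "measure_pmf.prob (play G (vec_profile z)) (hu_event G t i h u) =
      measure_pmf.prob (play G (vec_profile z)) {\<omega>. hist G i \<omega> t = h} * z (t, i, compress io1 io i h, u)"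
    unfolding play_def by (simp add: prob_hu_event[OF assms(2)] pmf_vec_profile[OF z assms(2)])
  moreover have "0 \<le> z (t, i, compress io1 io i h, u)" by (rule strategy_vecs_nonneg[OF z])
  ultimately show ?thesis
    using prob_hist_pos_iff_reachable[OF assms(1), of i t h]
      measure_nonneg[of "measure_pmf (play G (vec_profile z))" "{\<omega>. hist G i \<omega> t = h}"]
    by (simp add: zero_less_mult_iff)
qed

definition reachable_state :: "nat \<Rightarrow> 'p \<Rightarrow> 'k \<Rightarrow> bool" where
  "reachable_state t i k \<longleftrightarrow> (\<exists>h. compress io1 io i h = k \<and> reachable t i h)"

definition some_hist :: "nat \<Rightarrow> 'p \<Rightarrow> 'k \<Rightarrow> ('h,'u,'y) hist" where
  "some_hist t i k = (SOME h. compress io1 io i h = k \<and> reachable t i h)"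

lemma some_hist_reachable:
  "reachable_state t i k \<Longrightarrow> compress io1 io i (some_hist t i k) = k \<and> reachable t i (some_hist t i k)"
  unfolding reachable_state_def some_hist_def by (rule someI_ex)

text \<open>The Q-value of a coordinate, read off at a representative history: by mutual sufficiency
  of the information it does not depend on the representative (\<open>qval_eq_cond_exp\<close>).\<close>

definition qval :: "(nat \<times> 'p \<times> 'k \<times> 'u \<Rightarrow> real) \<Rightarrow> nat \<times> 'p \<times> 'k \<times> 'u \<Rightarrow> real" where
  "qval z a = (case a of (t, i, k, u) \<Rightarrow>
     if reachable_state t i k
     then cond_exp (play G (vec_profile z)) (hu_event G t i (some_hist t i k) u) (reward_to_go G i t)
     else 0)"

lemma qval_abs_le:
  assumes "z \<in> strategy_vecs"
  shows "\<bar>qval z a\<bar> \<le> real (horizon G)"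
proof -
  have "\<bar>reward_to_go G i \<tau> \<omega>\<bar> \<le> real (horizon G)" if "\<omega> \<in> set_pmf (play G (vec_profile z))" for i \<tau> \<omega>
    by (rule reward_to_go_abs_le[OF wf valid_profile_vec[OF assms] that])
  then have "\<bar>cond_exp (play G (vec_profile z)) A (reward_to_go G i \<tau>)\<bar> \<le> real (horizon G)" for A i \<tau>
    by (intro cond_exp_abs_le) (simp_all add: play_def finite_set_run)
  then show ?thesis unfolding qval_def by (simp split: prod.splits)
qed

lemma qval_eq_cond_exp:
  assumes z: "fully_mixed_vec z" and \<tau>: "\<tau> < horizon G" and h: "reachable \<tau> i h" and u: "u \<in> acts G \<tau> i"
  shows "cond_exp (play G (vec_profile z)) (hu_event G \<tau> i h u) (reward_to_go G i \<tau>) =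
         qval z (\<tau>, i, compress io1 io i h, u)"
proof -
  have zD: "z \<in> strategy_vecs" using z unfolding fully_mixed_vec_def by simp
  have "info_state G io1 io i (kbased io1 io (vec_kstrat z))"
    using msi valid_kstrat_vec[OF zD] unfolding mutually_sufficient_def by blast
  then obtain v where v: "\<And>\<tau> h u. \<tau> < horizon G \<Longrightarrow>
      measure_pmf.prob (play G (vec_profile z)) (hu_event G \<tau> i h u) > 0 \<Longrightarrow>
      cond_exp (play G (vec_profile z)) (hu_event G \<tau> i h u) (reward_to_go G i \<tau>) =
        v \<tau> (compress io1 io i h) u"
    using mutually_sufficient_value[OF valid_kstrat_vec[OF zD]] unfolding vec_profile_def by blast
  define k where "k = compress io1 io i h"
  have r: "reachable_state \<tau> i k" unfolding reachable_state_def k_def using h by blast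
  then have rep: "compress io1 io i (some_hist \<tau> i k) = k" "reachable \<tau> i (some_hist \<tau> i k)"
    using some_hist_reachable by auto
  have "cond_exp (play G (vec_profile z)) (hu_event G \<tau> i h u) (reward_to_go G i \<tau>) = v \<tau> k u"
    using v[OF \<tau>] prob_hu_event_pos_iff[OF z \<tau>] h u unfolding k_def by blast
  also have "\<dots> = cond_exp (play G (vec_profile z)) (hu_event G \<tau> i (some_hist \<tau> i k) u) (reward_to_go G i \<tau>)"
    using v[OF \<tau>] prob_hu_event_pos_iff[OF z \<tau>] rep u by metis
  also have "\<dots> = qval z (\<tau>, i, k, u)" using r by (simp add: qval_def)
  finally show ?thesis unfolding k_def .
qed

definition logit :: "real \<Rightarrow> (nat \<times> 'p \<times> 'k \<times> 'u \<Rightarrow> real) \<Rightarrow> nat \<times> 'p \<times> 'k \<times> 'u \<Rightarrow> real" where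
  "logit \<beta> z a = (case a of (t, i, k, u) \<Rightarrow>
     if a \<in> coords
     then exp (\<beta> * qval z (t, i, k, u)) / (\<Sum>u'\<in>acts G t i. exp (\<beta> * qval z (t, i, k, u')))
     else 0)"

text \<open>Since \<open>\<bar>qval\<bar> \<le> T\<close>, every logit weight is at least \<open>exp (-2\<beta>T) / n_acts\<close>; the extra
  \<open>+1\<close> in the denominator keeps \<open>n_acts * logit_floor \<beta> < 1\<close>.\<close>

definition logit_floor :: "real \<Rightarrow> real" where
  "logit_floor \<beta> = exp (- (2 * \<beta> * real (horizon G))) / (real CARD('u) + 1)"

lemma logit_floor_pos: "0 < logit_floor \<beta>"
  unfolding logit_floor_def by simp

lemma n_acts_logit_floor_less_1:
  assumes "0 \<le> \<beta>"
  shows "n_acts t i * logit_floor \<beta> < 1"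
proof -
  have "exp (- (2 * \<beta> * real (horizon G))) \<le> 1" using assms by simp
  then have "n_acts t i * exp (- (2 * \<beta> * real (horizon G))) \<le> n_acts t i"
    by (intro mult_left_le) (auto simp: n_acts_def)
  then have "n_acts t i * logit_floor \<beta> \<le> n_acts t i / (real CARD('u) + 1)"
    unfolding logit_floor_def times_divide_eq_right by (intro divide_right_mono) auto
  also have "\<dots> < 1" using n_acts_le_card[of t i] by (simp add: divide_less_eq)
  finally show ?thesis .
qed

lemma logit_ge_floor:
  assumes z: "z \<in> strategy_vecs" and "0 \<le> \<beta>" and a: "(t, i, k, u) \<in> coords"
  shows "logit_floor \<beta> \<le> logit \<beta> z (t, i, k, u)"
proof -
  define T where "T = real (horizon G)"
  have q: "- T \<le> qval z a \<and> qval z a \<le> T" for a using qval_abs_le[OF z, of a] unfolding T_def by auto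
  have lo: "exp (- (\<beta> * T)) \<le> exp (\<beta> * qval z (t, i, k, u))"
    using q[of "(t, i, k, u)"] \<open>0 \<le> \<beta>\<close> mult_left_mono[of "-T" "qval z (t, i, k, u)" \<beta>] by simp
  have t: "t < horizon G" using a unfolding coords_def by simp
  have den: "(\<Sum>u'\<in>acts G t i. exp (\<beta> * qval z (t, i, k, u'))) \<le> n_acts t i * exp (\<beta> * T)"
    using sum_mono[of "acts G t i" "\<lambda>u'. exp (\<beta> * qval z (t, i, k, u'))" "\<lambda>_. exp (\<beta> * T)"]
      q \<open>0 \<le> \<beta>\<close> by (simp add: n_acts_def mult_left_mono)
  have den_pos: "0 < (\<Sum>u'\<in>acts G t i. exp (\<beta> * qval z (t, i, k, u')))"
    using acts_nonempty[OF t] by (intro sum_pos) auto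
  have "logit_floor \<beta> \<le> exp (- (2 * \<beta> * T)) / n_acts t i"
    unfolding logit_floor_def T_def using n_acts_le_card[of t i] n_acts_ge_1[OF t, of i]
    by (intro divide_left_mono) auto
  also have "\<dots> = exp (- (\<beta> * T)) / (n_acts t i * exp (\<beta> * T))"
    by (simp add: exp_minus exp_add[symmetric] field_simps)
  also have "\<dots> \<le> exp (\<beta> * qval z (t, i, k, u)) / (\<Sum>u'\<in>acts G t i. exp (\<beta> * qval z (t, i, k, u')))"
    by (rule frac_le) (use lo den den_pos in auto)
  also have "\<dots> = logit \<beta> z (t, i, k, u)" using a by (simp add: logit_def)
  finally show ?thesis .
qed

lemma logit_in_strategy_vecs_ge:
  assumes z: "z \<in> strategy_vecs" and "0 \<le> \<beta>"
  shows "logit \<beta> z \<in> strategy_vecs_ge (logit_floor \<beta>)"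
proof -
  have sum1: "(\<Sum>u\<in>acts G t i. logit \<beta> z (t, i, k, u)) = 1" if t: "t < horizon G" for t i k
  proof -
    have "(\<Sum>u\<in>acts G t i. logit \<beta> z (t, i, k, u)) =
          (\<Sum>u\<in>acts G t i. exp (\<beta> * qval z (t, i, k, u)) / (\<Sum>u'\<in>acts G t i. exp (\<beta> * qval z (t, i, k, u'))))"
      by (rule sum.cong) (use t in \<open>auto simp: logit_def coords_def\<close>)
    moreover have "0 < (\<Sum>u'\<in>acts G t i. exp (\<beta> * qval z (t, i, k, u')))"
      using acts_nonempty[OF t] by (intro sum_pos) auto
    ultimately show ?thesis by (simp add: sum_divide_distrib[symmetric])
  qed
  have floor: "logit_floor \<beta> \<le> logit \<beta> z a" if "a \<in> coords" for a
    using logit_ge_floor[OF assms] that by (cases a) auto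
  have outside: "logit \<beta> z a = 0" if "a \<notin> coords" for a
    using that by (auto simp: logit_def split: prod.splits)
  show ?thesis
    unfolding strategy_vecs_ge_def strategy_vecs_def
    using sum1 floor outside logit_floor_pos[of \<beta>] by (auto intro: order.trans[OF less_imp_le])
qed

text \<open>For \<open>n_acts * c < 1\<close>, a continuous retraction of all vectors onto \<open>strategy_vecs_ge c\<close>.\<close>

definition floor_retract :: "real \<Rightarrow> (nat \<times> 'p \<times> 'k \<times> 'u \<Rightarrow> real) \<Rightarrow> nat \<times> 'p \<times> 'k \<times> 'u \<Rightarrow> real" where
  "floor_retract c x a = (case a of (t, i, k, u) \<Rightarrow>
     if a \<in> coords
     then c + (1 - n_acts t i * c) *
            simplex_retract (acts G t i) (\<lambda>u'. (x (t, i, k, u') - c) / (1 - n_acts t i * c)) u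
     else 0)"

context
  fixes c :: real
  assumes c: "0 < c" and n_acts_c: "\<And>t i. n_acts t i * c < 1"
begin

lemma floor_retract_in: "floor_retract c x \<in> strategy_vecs_ge c"
proof -
  have floor: "c \<le> floor_retract c x a" if "a \<in> coords" for a
    using that less_imp_le[OF n_acts_c] simplex_retract_nonneg
    by (auto simp: floor_retract_def split: prod.splits intro!: mult_nonneg_nonneg)
  have sum1: "(\<Sum>u\<in>acts G t i. floor_retract c x (t, i, k, u)) = 1" if t: "t < horizon G" for t i k
  proof -
    define y where "y = (\<lambda>u'. (x (t, i, k, u') - c) / (1 - n_acts t i * c))"
    have "(\<Sum>u\<in>acts G t i. floor_retract c x (t, i, k, u)) =
          (\<Sum>u\<in>acts G t i. c + (1 - n_acts t i * c) * simplex_retract (acts G t i) y u)"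
      by (rule sum.cong) (use t in \<open>auto simp: floor_retract_def coords_def y_def\<close>)
    also have "\<dots> = n_acts t i * c + (1 - n_acts t i * c) * (\<Sum>u\<in>acts G t i. simplex_retract (acts G t i) y u)"
      by (simp add: sum.distrib sum_distrib_left n_acts_def)
    also have "\<dots> = 1" using sum_simplex_retract[OF finite acts_nonempty[OF t]] by simp
    finally show ?thesis .
  qed
  have outside: "floor_retract c x a = 0" if "a \<notin> coords" for a
    using that by (auto simp: floor_retract_def split: prod.splits)
  show ?thesis
    unfolding strategy_vecs_ge_def strategy_vecs_def
    using floor sum1 outside c by (auto intro: order.trans[OF less_imp_le])
qed

lemma floor_retract_id:
  assumes x: "x \<in> strategy_vecs_ge c"
  shows "floor_retract c x = x"
proof
  fix a
  show "floor_retract c x a = x a"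
  proof (cases "a \<in> coords")
    case False
    then show ?thesis
      using x strategy_vecs_outside[of x a] unfolding strategy_vecs_ge_def
      by (auto simp: floor_retract_def split: prod.splits)
  next
    case True
    obtain t i k u where a: "a = (t, i, k, u)" by (cases a) auto
    have t: "t < horizon G" and u: "u \<in> acts G t i" using True a unfolding coords_def by auto
    define y where "y u' = (x (t, i, k, u') - c) / (1 - n_acts t i * c)" for u'
    have pos: "0 < 1 - n_acts t i * c" using n_acts_c[of t i] by simp
    have "c \<le> x (t, i, k, u')" if "u' \<in> acts G t i" for u'
      using x t that unfolding strategy_vecs_ge_def coords_def by auto
    then have y_nonneg: "0 \<le> y u'" if "u' \<in> acts G t i" for u'
      using that pos unfolding y_def by simp
    have "(\<Sum>u'\<in>acts G t i. x (t, i, k, u') - c) = 1 - n_acts t i * c"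
      using x t unfolding strategy_vecs_ge_def strategy_vecs_def by (simp add: sum_subtractf n_acts_def)
    then have "(\<Sum>u'\<in>acts G t i. y u') = 1"
      using pos unfolding y_def by (simp add: sum_divide_distrib[symmetric])
    then have "simplex_retract (acts G t i) y u = y u"
      using y_nonneg u by (intro simplex_retract_id) auto
    then show ?thesis using True a pos unfolding floor_retract_def y_def by simp
  qed
qed

lemma tendsto_floor_retract:
  assumes X: "\<And>a. a \<in> coords \<Longrightarrow> (\<lambda>n. X n a) \<longlonglongrightarrow> x a"
  shows "(\<lambda>n. floor_retract c (X n) a) \<longlonglongrightarrow> floor_retract c x a"
proof (cases "a \<in> coords")
  case True
  obtain t i k u where a: "a = (t, i, k, u)" by (cases a) auto
  have t: "t < horizon G" and u: "u \<in> acts G t i" using True a unfolding coords_def by auto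
  have "(\<lambda>n. (X n (t, i, k, u') - c) / (1 - n_acts t i * c)) \<longlonglongrightarrow> (x (t, i, k, u') - c) / (1 - n_acts t i * c)"
    if "u' \<in> acts G t i" for u'
  proof -
    have "(t, i, k, u') \<in> coords" using t that unfolding coords_def by simp
    then show ?thesis using n_acts_c[of t i] by (intro tendsto_intros X) auto
  qed
  then have "(\<lambda>n. simplex_retract (acts G t i) (\<lambda>u'. (X n (t, i, k, u') - c) / (1 - n_acts t i * c)) u)
      \<longlonglongrightarrow> simplex_retract (acts G t i) (\<lambda>u'. (x (t, i, k, u') - c) / (1 - n_acts t i * c)) u"
    by (rule tendsto_simplex_retract[OF finite _ u])
  then show ?thesis using True a unfolding floor_retract_def by (simp add: tendsto_intros)
qed (simp add: floor_retract_def split: prod.splits)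

end

lemma tendsto_vec_profile:
  assumes Z: "\<And>n. Z n \<in> strategy_vecs" and z: "z \<in> strategy_vecs"
    and conv: "\<And>a. a \<in> coords \<Longrightarrow> (\<lambda>n. Z n a) \<longlonglongrightarrow> z a"
  shows "(\<lambda>n. pmf (vec_profile (Z n) t i h) u) \<longlonglongrightarrow> pmf (vec_profile z t i h) u"
proof (cases "t < horizon G")
  case True
  then show ?thesis
    using conv[of "(t, i, compress io1 io i h, u)"] strategy_vecs_outside[OF z] strategy_vecs_outside[OF Z]
    by (cases "(t, i, compress io1 io i h, u) \<in> coords") (simp_all add: pmf_vec_profile Z z)
next
  case False
  then have "vec_profile (Z n) t i h = vec_profile z t i h" for n
    using strategy_vecs_outside[OF Z] strategy_vecs_outside[OF z]
    unfolding vec_profile_def kbased_def vec_kstrat_def coords_def by simp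
  then show ?thesis by simp
qed

lemma tendsto_qval:
  assumes c: "0 < c" and Z: "\<And>n. Z n \<in> strategy_vecs" and z: "z \<in> strategy_vecs_ge c"
    and conv: "\<And>a. a \<in> coords \<Longrightarrow> (\<lambda>n. Z n a) \<longlonglongrightarrow> z a" and a: "a \<in> coords"
  shows "(\<lambda>n. qval (Z n) a) \<longlonglongrightarrow> qval z a"
proof -
  obtain t i k u where a_eq: "a = (t, i, k, u)" by (cases a) auto
  have t: "t < horizon G" and u: "u \<in> acts G t i" using a a_eq unfolding coords_def by auto
  show ?thesis
  proof (cases "reachable_state t i k")
    case True
    define A where "A = hu_event G t i (some_hist t i k) u"
    have zD: "z \<in> strategy_vecs" using z unfolding strategy_vecs_ge_def by simp
    note pmf_conv = tendsto_vec_profile[OF Z zD conv]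
    have num: "(\<lambda>n. \<integral>\<omega>. indicator A \<omega> * reward_to_go G i t \<omega> \<partial>play G (vec_profile (Z n))) \<longlonglongrightarrow>
               (\<integral>\<omega>. indicator A \<omega> * reward_to_go G i t \<omega> \<partial>play G (vec_profile z))"
      unfolding play_def by (rule tendsto_integral_run[OF pmf_conv])
    have den: "(\<lambda>n. measure_pmf.prob (play G (vec_profile (Z n))) A) \<longlonglongrightarrow> measure_pmf.prob (play G (vec_profile z)) A"
      using tendsto_integral_run[OF pmf_conv, where F = "indicator A"] unfolding play_def by simp
    have "measure_pmf.prob (play G (vec_profile z)) A > 0"
      unfolding A_def using prob_hu_event_pos_iff[OF fully_mixed_vec_ge[OF c z] t] some_hist_reachable[OF True] u by blast
    then have "(\<lambda>n. cond_exp (play G (vec_profile (Z n))) A (reward_to_go G i t)) \<longlonglongrightarrow>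
               cond_exp (play G (vec_profile z)) A (reward_to_go G i t)"
      unfolding cond_exp_def by (intro tendsto_divide num den) simp
    then show ?thesis using True a_eq by (simp add: qval_def A_def)
  qed (simp add: qval_def a_eq)
qed

lemma tendsto_logit:
  assumes c: "0 < c" and Z: "\<And>n. Z n \<in> strategy_vecs" and z: "z \<in> strategy_vecs_ge c"
    and conv: "\<And>a. a \<in> coords \<Longrightarrow> (\<lambda>n. Z n a) \<longlonglongrightarrow> z a" and a: "a \<in> coords"
  shows "(\<lambda>n. logit \<beta> (Z n) a) \<longlonglongrightarrow> logit \<beta> z a"
proof -
  obtain t i k u where a_eq: "a = (t, i, k, u)" by (cases a) auto
  have t: "t < horizon G" and u: "u \<in> acts G t i" using a a_eq unfolding coords_def by auto
  have q: "(\<lambda>n. qval (Z n) (t, i, k, u')) \<longlonglongrightarrow> qval z (t, i, k, u')" if "u' \<in> acts G t i" for u'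
  proof -
    have "(t, i, k, u') \<in> coords" using t that unfolding coords_def by simp
    then show ?thesis using tendsto_qval[OF c Z z conv] by blast
  qed
  have "(\<Sum>u'\<in>acts G t i. exp (\<beta> * qval z (t, i, k, u'))) \<noteq> 0"
    using acts_nonempty[OF t] by (intro sum_pos[THEN less_imp_neq, symmetric]) auto
  then have "(\<lambda>n. exp (\<beta> * qval (Z n) (t, i, k, u)) / (\<Sum>u'\<in>acts G t i. exp (\<beta> * qval (Z n) (t, i, k, u')))) \<longlonglongrightarrow>
        exp (\<beta> * qval z (t, i, k, u)) / (\<Sum>u'\<in>acts G t i. exp (\<beta> * qval z (t, i, k, u')))"
    by (intro tendsto_intros q u)
  then show ?thesis using a a_eq unfolding logit_def by simp
qed

text \<open>A fixed point of \<open>logit \<beta> \<circ> floor_retract (logit_floor \<beta>)\<close> lies in \<open>strategy_vecs_ge\<close>,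
  where the retraction is the identity.\<close>

lemma logit_fixpoint_exists:
  assumes "0 \<le> \<beta>"
  obtains z where "z \<in> strategy_vecs_ge (logit_floor \<beta>)" and "logit \<beta> z = z"
proof -
  define c where "c = logit_floor \<beta>"
  have c: "0 < c" unfolding c_def by (rule logit_floor_pos)
  have n_acts_c: "n_acts t i * c < 1" for t i unfolding c_def by (rule n_acts_logit_floor_less_1[OF assms])
  define F where "F x = logit \<beta> (floor_retract c x)" for x
  have F_in: "F x \<in> strategy_vecs_ge c" for x
    unfolding F_def c_def
    using floor_retract_in[OF c n_acts_c] assms
    by (intro logit_in_strategy_vecs_ge) (auto simp: strategy_vecs_ge_def c_def)
  obtain x where x: "x \<in> unit_cube coords" "F x = x"
  proof (rule brouwer_unit_cube[OF finite_coords])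
    show "F x \<in> unit_cube coords" for x
      using F_in[of x] strategy_vecs_unit_cube unfolding strategy_vecs_ge_def by blast
    show "(\<lambda>m. F (X m) a) \<longlonglongrightarrow> F x a"
      if "\<And>a. a \<in> coords \<Longrightarrow> (\<lambda>m. X m a) \<longlonglongrightarrow> x a" "a \<in> coords" for X x a
      unfolding F_def using floor_retract_in[OF c n_acts_c]
      by (intro tendsto_logit[OF c _ _ tendsto_floor_retract[OF c n_acts_c that(1)] that(2)])
        (auto simp: strategy_vecs_ge_def)
  qed
  have "x \<in> strategy_vecs_ge c" using F_in[of x] x(2) by simp
  moreover from this have "logit \<beta> x = x"
    using x(2) floor_retract_id[OF c n_acts_c] unfolding F_def by simp
  ultimately show thesis using that unfolding c_def by blast
qed

section \<open>Limits of logit equilibria\<close>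

lemma strategy_vecs_limit:
  assumes Z: "\<And>n. Z n \<in> strategy_vecs" and conv: "\<And>a. (\<lambda>n. Z n a) \<longlonglongrightarrow> z a"
  shows "z \<in> strategy_vecs"
proof -
  have "z a = 0" if "a \<notin> coords" for a
    using conv[of a] strategy_vecs_outside[OF Z that] LIMSEQ_unique[OF _ tendsto_const] by simp
  moreover have "0 \<le> z a" for a
    using strategy_vecs_nonneg[OF Z] by (intro LIMSEQ_le_const[OF conv]) simp
  moreover have "(\<Sum>u\<in>acts G t i. z (t, i, k, u)) = 1" if "t < horizon G" for t i k
  proof -
    have "(\<lambda>n. \<Sum>u\<in>acts G t i. Z n (t, i, k, u)) \<longlonglongrightarrow> (\<Sum>u\<in>acts G t i. z (t, i, k, u))"
      by (intro tendsto_sum conv)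
    moreover have "(\<Sum>u\<in>acts G t i. Z n (t, i, k, u)) = 1" for n
      using Z[of n] that unfolding strategy_vecs_def by blast
    ultimately show ?thesis using LIMSEQ_unique[OF _ tendsto_const] by simp
  qed
  ultimately show ?thesis unfolding strategy_vecs_def by blast
qed

definition limit_qval :: "(nat \<times> 'p \<times> 'k \<times> 'u \<Rightarrow> real) \<Rightarrow> nat \<Rightarrow> 'p \<Rightarrow> ('h,'u,'y) hist \<Rightarrow> 'u \<Rightarrow> real" where
  "limit_qval ql \<tau> i h u =
     (if \<tau> < horizon G \<and> reachable \<tau> i h \<and> u \<in> acts G \<tau> i then ql (\<tau>, i, compress io1 io i h, u) else 0)"

lemma fully_consistent_limit:
  assumes Z: "\<And>n. fully_mixed_vec (Z n)" and z: "z \<in> strategy_vecs"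
    and Zz: "\<And>a. a \<in> coords \<Longrightarrow> (\<lambda>n. Z n a) \<longlonglongrightarrow> z a"
    and ql: "\<And>a. a \<in> coords \<Longrightarrow> (\<lambda>n. qval (Z n) a) \<longlonglongrightarrow> ql a"
  shows "fully_consistent G (vec_profile z) (limit_qval ql)"
proof -
  have ZD: "Z n \<in> strategy_vecs" for n using Z unfolding fully_mixed_vec_def by blast
  define Qn where "Qn n \<tau> i h u =
     (if measure_pmf.prob (play G (vec_profile (Z n))) (hu_event G \<tau> i h u) > 0
      then cond_exp (play G (vec_profile (Z n))) (hu_event G \<tau> i h u) (reward_to_go G i \<tau>) else 0)"
    for n \<tau> i h u
  have Qn_conv: "(\<lambda>n. Qn n t i h u) \<longlonglongrightarrow> limit_qval ql t i h u" if t: "t < horizon G" for t i h u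
  proof (cases "reachable t i h \<and> u \<in> acts G t i")
    case True
    then have "Qn n t i h u = qval (Z n) (t, i, compress io1 io i h, u)" for n
      unfolding Qn_def using prob_hu_event_pos_iff[OF Z t] qval_eq_cond_exp[OF Z t] by simp
    moreover have "(t, i, compress io1 io i h, u) \<in> coords" using t True unfolding coords_def by simp
    ultimately show ?thesis using ql True t unfolding limit_qval_def by simp
  next
    case False
    then have "Qn n t i h u = 0" for n
      unfolding Qn_def using prob_hu_event_pos_iff[OF Z t, of n i h u] by auto
    moreover have "limit_qval ql t i h u = 0" using False unfolding limit_qval_def by auto
    ultimately show ?thesis by simp
  qed
  show ?thesis
    unfolding fully_consistent_def
  proof (intro exI[of _ "\<lambda>n. vec_profile (Z n)"] exI[of _ Qn] conjI allI impI)
    show "valid_profile G (vec_profile (Z n))" "fully_mixed G (vec_profile (Z n))" for n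
      using valid_profile_vec[OF ZD] fully_mixed_vec_profile[OF Z] by blast+
    show "(\<lambda>n. pmf (vec_profile (Z n) t i h) u) \<longlonglongrightarrow> pmf (vec_profile z t i h) u" for t i h u
      by (rule tendsto_vec_profile[OF ZD z Zz])
    show "(\<lambda>n. Qn n t i h u) \<longlonglongrightarrow> limit_qval ql t i h u" if "t < horizon G" for t i h u
      by (rule Qn_conv[OF that])
    show "Qn n \<tau> i h u = cond_exp (play G (vec_profile (Z n))) (hu_event G \<tau> i h u)
        (\<lambda>\<omega>. \<Sum>t = \<tau>..<horizon G. reward G i \<omega> t)"
      if "0 < measure_pmf.prob (play G (vec_profile (Z n))) (hu_event G \<tau> i h u)" for n \<tau> i h u
      using that unfolding Qn_def reward_to_go_def[abs_def] by simp
  qed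
qed

lemma logit_fixpoint_le:
  assumes "logit \<beta> z = z" and "(t, i, k, u) \<in> coords" and "u' \<in> acts G t i"
  shows "z (t, i, k, u) \<le> exp (- (\<beta> * (qval z (t, i, k, u') - qval z (t, i, k, u))))"
proof -
  let ?S = "\<Sum>u''\<in>acts G t i. exp (\<beta> * qval z (t, i, k, u''))"
  have S: "exp (\<beta> * qval z (t, i, k, u')) \<le> ?S"
    using assms(3) by (intro member_le_sum) auto
  have "0 < ?S" using order.strict_trans2[OF exp_gt_zero S] .
  moreover have "z (t, i, k, u) = exp (\<beta> * qval z (t, i, k, u)) / ?S"
    using fun_cong[OF assms(1), of "(t, i, k, u)"] assms(2) by (simp add: logit_def)
  ultimately have "z (t, i, k, u) \<le> exp (\<beta> * qval z (t, i, k, u)) / exp (\<beta> * qval z (t, i, k, u'))"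
    using S by (simp add: divide_left_mono)
  then show ?thesis by (simp add: exp_diff[symmetric] algebra_simps)
qed

lemma logit_limit_suboptimal_zero:
  assumes fixpoint: "\<And>n. logit (\<beta> n) (Z n) = Z n" and \<beta>: "\<And>n. real n \<le> \<beta> n"
    and Z: "\<And>n. Z n \<in> strategy_vecs"
    and Zz: "(\<lambda>n. Z n (t, i, k, u)) \<longlonglongrightarrow> z (t, i, k, u)"
    and ql: "\<And>v. v \<in> acts G t i \<Longrightarrow> (\<lambda>n. qval (Z n) (t, i, k, v)) \<longlonglongrightarrow> ql (t, i, k, v)"
    and a: "(t, i, k, u) \<in> coords" and u': "u' \<in> acts G t i"
    and worse: "ql (t, i, k, u) < ql (t, i, k, u')"
  shows "z (t, i, k, u) = 0"
proof -
  have u: "u \<in> acts G t i" using a unfolding coords_def by simp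
  define d where "d = ql (t, i, k, u') - ql (t, i, k, u)"
  have d: "0 < d" using worse unfolding d_def by simp
  have "(\<lambda>n. qval (Z n) (t, i, k, u') - qval (Z n) (t, i, k, u)) \<longlonglongrightarrow> d"
    unfolding d_def by (intro tendsto_diff ql u u')
  then have ev: "\<forall>\<^sub>F n in sequentially. d / 2 < qval (Z n) (t, i, k, u') - qval (Z n) (t, i, k, u)"
    by (rule order_tendstoD(1)) (use d in linarith)
  have bound: "Z n (t, i, k, u) \<le> exp (- (real n * (d / 2)))"
    if gap: "d / 2 < qval (Z n) (t, i, k, u') - qval (Z n) (t, i, k, u)" for n
  proof -
    have "real n * (d / 2) \<le> \<beta> n * (qval (Z n) (t, i, k, u') - qval (Z n) (t, i, k, u))"
      using \<beta>[of n] gap d by (intro mult_mono) auto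
    then have "exp (- (\<beta> n * (qval (Z n) (t, i, k, u') - qval (Z n) (t, i, k, u)))) \<le> exp (- (real n * (d / 2)))"
      by simp
    with logit_fixpoint_le[OF fixpoint a u', of n] show ?thesis by linarith
  qed
  have upper: "\<forall>\<^sub>F n in sequentially. Z n (t, i, k, u) \<le> exp (- (real n * (d / 2)))"
    using ev by (rule eventually_mono) (rule bound)
  have "(\<lambda>n. Z n (t, i, k, u)) \<longlonglongrightarrow> 0"
  proof (rule tendsto_sandwich[OF _ upper tendsto_const exp_neg_linear_tendsto_0])
    show "\<forall>\<^sub>F n in sequentially. 0 \<le> Z n (t, i, k, u)"
      by (intro always_eventually allI strategy_vecs_nonneg[OF Z])
    show "0 < d / 2" using d by simp
  qed
  then show ?thesis using LIMSEQ_unique[OF Zz] by blast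
qed

lemma seq_rational_limit:
  assumes fixpoint: "\<And>n. logit (\<beta> n) (Z n) = Z n" and \<beta>: "\<And>n. real n \<le> \<beta> n"
    and Z: "\<And>n. Z n \<in> strategy_vecs" and z: "z \<in> strategy_vecs"
    and Zz: "\<And>a. (\<lambda>n. Z n a) \<longlonglongrightarrow> z a"
    and ql: "\<And>a. a \<in> coords \<Longrightarrow> (\<lambda>n. qval (Z n) a) \<longlonglongrightarrow> ql a"
  shows "seq_rational G (vec_profile z) (limit_qval ql)"
  unfolding seq_rational_def
proof (intro allI impI subsetI)
  fix t i h u
  assume t: "t < horizon G" and u: "u \<in> set_pmf (vec_profile z t i h)"
  define k where "k = compress io1 io i h"
  have pos: "z (t, i, k, u) \<noteq> 0" using u by (simp add: set_pmf_eq pmf_vec_profile[OF z t] k_def)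
  then have a: "(t, i, k, u) \<in> coords" using strategy_vecs_outside[OF z] by blast
  then have uA: "u \<in> acts G t i" unfolding coords_def by simp
  have ql_k: "(\<lambda>n. qval (Z n) (t, i, k, v)) \<longlonglongrightarrow> ql (t, i, k, v)" if "v \<in> acts G t i" for v
    using t that by (intro ql) (simp add: coords_def)
  have "limit_qval ql t i h u' \<le> limit_qval ql t i h u" if u': "u' \<in> acts G t i" for u'
  proof (cases "reachable t i h")
    case True
    have "\<not> ql (t, i, k, u) < ql (t, i, k, u')"
      using logit_limit_suboptimal_zero[where \<beta> = \<beta> and Z = Z and z = z and ql = ql, OF fixpoint \<beta> Z Zz[of "(t, i, k, u)"] ql_k a u'] pos by blast
    then show ?thesis using True t u' uA unfolding limit_qval_def k_def by simp
  qed (simp add: limit_qval_def)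
  then show "u \<in> {u \<in> acts G t i. \<forall>u'\<in>acts G t i. limit_qval ql t i h u' \<le> limit_qval ql t i h u}"
    using uA by blast
qed

lemma strategy_vecs_qval_convergent_subseq:
  fixes X :: "nat \<Rightarrow> nat \<times> 'p \<times> 'k \<times> 'u \<Rightarrow> real"
  assumes X: "\<And>n. X n \<in> strategy_vecs"
  obtains \<sigma> z ql where "strict_mono \<sigma>" and "z \<in> strategy_vecs"
    and "\<And>a. (\<lambda>n. X (\<sigma> n) a) \<longlonglongrightarrow> z a"
    and "\<And>a. a \<in> coords \<Longrightarrow> (\<lambda>n. qval (X (\<sigma> n)) a) \<longlonglongrightarrow> ql a"
proof -
  define Y where "Y ab n = (if snd ab then X n (fst ab) else qval (X n) (fst ab))" for ab n
  have bound: "\<bar>Y ab n\<bar> \<le> real (horizon G) + 1" for ab n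
  proof (cases "snd ab")
    case True
    then show ?thesis
      using strategy_vecs_nonneg[OF X, of n "fst ab"] strategy_vecs_le_1[OF X, of n "fst ab"]
      by (simp add: Y_def)
  next
    case False
    then show ?thesis using qval_abs_le[OF X, of n "fst ab"] by (simp add: Y_def)
  qed
  have "finite (coords \<times> (UNIV :: bool set))" using finite_coords by simp
  then obtain \<sigma> where \<sigma>: "strict_mono \<sigma>"
    and conv: "\<And>ab. ab \<in> coords \<times> UNIV \<Longrightarrow> convergent (\<lambda>n. Y ab (\<sigma> n))"
    using convergent_subseq_finite_family[of "coords \<times> UNIV" Y "real (horizon G) + 1"] bound by blast
  define z where "z a = (if a \<in> coords then lim (\<lambda>n. X (\<sigma> n) a) else 0)" for a
  define ql where "ql a = lim (\<lambda>n. qval (X (\<sigma> n)) a)" for a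
  have z_lim: "(\<lambda>n. X (\<sigma> n) a) \<longlonglongrightarrow> z a" for a
  proof (cases "a \<in> coords")
    case True
    then show ?thesis using conv[of "(a, True)"] unfolding z_def Y_def by (simp add: convergent_LIMSEQ_iff)
  qed (simp add: z_def strategy_vecs_outside[OF X])
  have ql_lim: "(\<lambda>n. qval (X (\<sigma> n)) a) \<longlonglongrightarrow> ql a" if "a \<in> coords" for a
    using conv[of "(a, False)"] that unfolding ql_def Y_def by (simp add: convergent_LIMSEQ_iff)
  show thesis by (rule that[OF \<sigma> strategy_vecs_limit[OF X z_lim] z_lim ql_lim])
qed

lemma kbased_sequential_equilibrium_exists:
  "\<exists>\<rho> Q. valid_kstrat G \<rho> \<and> sequential_equilibrium G (kbased io1 io \<rho>) Q"
proof -
  have "\<exists>z. z \<in> strategy_vecs_ge (logit_floor (real n)) \<and> logit (real n) z = z" for n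
  proof -
    obtain z where "z \<in> strategy_vecs_ge (logit_floor (real n))" "logit (real n) z = z"
      using logit_fixpoint_exists[of "real n"] by auto
    then show ?thesis by blast
  qed
  then obtain X where X: "\<And>n. X n \<in> strategy_vecs_ge (logit_floor (real n))"
    and fixpoint: "\<And>n. logit (real n) (X n) = X n"
    by metis
  have XD: "X n \<in> strategy_vecs" for n using X unfolding strategy_vecs_ge_def by blast
  have mixed: "fully_mixed_vec (X n)" for n by (rule fully_mixed_vec_ge[OF logit_floor_pos X])
  obtain \<sigma> z ql where \<sigma>: "strict_mono \<sigma>" and z: "z \<in> strategy_vecs"
    and z_lim: "\<And>a. (\<lambda>n. X (\<sigma> n) a) \<longlonglongrightarrow> z a"
    and ql_lim: "\<And>a. a \<in> coords \<Longrightarrow> (\<lambda>n. qval (X (\<sigma> n)) a) \<longlonglongrightarrow> ql a"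
    using strategy_vecs_qval_convergent_subseq[where X = X, OF XD] by blast
  have "seq_rational G (vec_profile z) (limit_qval ql)"
    using seq_suble[OF \<sigma>] by (intro seq_rational_limit[OF fixpoint _ XD z z_lim ql_lim]) simp
  moreover have "fully_consistent G (vec_profile z) (limit_qval ql)"
    by (rule fully_consistent_limit[OF mixed z z_lim ql_lim])
  ultimately have "sequential_equilibrium G (kbased io1 io (vec_kstrat z)) (limit_qval ql)"
    unfolding sequential_equilibrium_def vec_profile_def[symmetric] using valid_profile_vec[OF z] by blast
  then show ?thesis using valid_kstrat_vec[OF z] by blast
qed

end

theorem theorem3:
  fixes G :: "('p::finite, 'x::finite, 'u::finite, 'y::finite, 'w::finite, 'h::finite) game"
    and io1 :: "'p \<Rightarrow> 'h \<Rightarrow> 'k::finite"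
    and io :: "nat \<Rightarrow> 'p \<Rightarrow> 'k \<Rightarrow> ('u \<times> 'y) \<Rightarrow> 'k"
  assumes "wf_game G"
    and "mutually_sufficient G io1 io"
  shows "\<exists>\<rho> Q. valid_kstrat G \<rho> \<and> sequential_equilibrium G (kbased io1 io \<rho>) Q"
proof -
  interpret msi_game G io1 io using assms by unfold_locales
  show ?thesis by (rule kbased_sequential_equilibrium_exists)
qed

end
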